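(* Let $r,s$ be positive integers, $1\le e\le s$, and let $S\subseteq[F]^{r,s}$ be $e$-superlarge. Let $\sigma$ be a sentence of type $\Sigma^*(\mathrm{iv})$ such that every $c_{ij}$ occurring in $\sigma$ satisfies $i\le s$ and $j\le r$, and with $\iota(\sigma)=e'\geq e$. Then there is an $e'$-superlarge set $S'\subseteq S$ such that $M\models\sigma(\mathbf{a})$ for every $\mathbf{a}\in S'$.
   Context: $\mathcal{L}$ is a countable first-order language containing a binary symbol $<$; $\mathcal{L}^S$ is $\mathcal{L}$ with Skolem function symbols, $T_{\mathrm{skolem}}$ the theory saying they are Skolem functions; "term" means $\mathcal{L}^S$-term. $\theta$ is a strongly inaccessible cardinal and $M$ is a model of $T_{\mathrm{skolem}}$ whose $\mathcal{L}$-reduct is a $\theta$-like model (cardinality $\theta$, every proper initial segment of cardinality $<\theta$) of a complete $\mathcal{L}$-theory $T$ in which $<$ is a linear order. Fix a chain $\langle M_i;i<\theta\rangle$ of $\mathcal{L}^S$-elementary submodels of $M$, each a proper initial segment of $M$, with $M_j$ an elementary end extension of $M_i$ for $i<j$, $M_\delta=\bigcup_{i<\delta}M_i$ for limit $\delta$, and $M=\bigcup_{i<\theta}M_i$. $F:M\to\theta$, $F(a)=$ least $i$ with $a\in M_i$. For $X\subseteq M$, $[X]^r$ is the set of strictly increasing $r$-sequences from $X$, and $[X]^\mu$ the set of subsets of $X$ of cardinality $\mu$. $[F]^{r,s}$ is the set of $\mathbf{x}=\langle\mathbf{x}_1,\dots,\mathbf{x}_s\rangle$ with $\mathbf{x}_i=\langle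 x_{i1},\dots,x_{ir}\rangle\in[M]^r$, $F(x_{ij})=F(x_{il})$ for all $i,j,l$, and $F(x_{11})<F(x_{21})<\dots<F(x_{s1})$. For $A\subseteq M$, $[F|A]^{r,s}=\{\mathbf{x}\in[F]^{r,s}: \text{all }x_{ij}\in A\}$. Game $G(S,e)$ for $S\subseteq[F]^{r,s}$, $1\le e\le s$, $f=s-e$: for $k=1,\dots,e$, player I chooses a cardinal $\mu_k<\theta$ and then II responds; for $k<e$ II chooses an ordinal $\beta_k<\theta$, and at his last move II chooses a sequence of ordinals $\langle\beta_{e+i};i<\theta\rangle$ below $\theta$ (with $i=0$ giving $\beta_e$). II wins iff $\beta_1<\dots<\beta_e<\beta_{e+1}<\dots$ and there are $X_k\in[F^{-1}(\beta_k)]^{\mu_k}$ ($1\le k\le e$) and $X_{e+i}\subseteq F^{-1}(\beta_{e+i})$ ($1\le i<\theta$) with $\sup\{|X_{e+i}|:1\le i<\theta\}=\theta$ and $\prod_{k=1}^e[X_k]^r\times[F|\bigcup_{1\le i<\theta}X_{e+i}]^{r,f}\subseteq S$ (for $f=0$ this reads $\prod_{k=1}^e[X_k]^r\subseteq S$). $S$ is $e$-superlarge iff II has a winning strategy in $G(S,e)$. $C^*=\{c_{ij}\mid i,j<\omega\}$ are new constants. A sentence of type $\Sigma^*(\mathrm{iv})$ is one of the form: if $\tau(c_{i_1j_1},\dots,c_{i_nj_n})<c_{uv}$ then $\tau(\bar c,c_{i_{m+1}j_{m+1}},\dots,c_{i_nj_n})=\tau(\bar c,c_{i_{m+1}l_{m+1}},\dots,c_{i_nl_n})$,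 where $\tau$ is a term, constants are from $C^*$, $c_{i_1j_1},\dots,c_{i_nj_n}$ are strictly increasing lexicographically (as is $\langle\bar c,c_{i_{m+1}l_{m+1}},\dots,c_{i_nl_n}\rangle$), $u<i_n$, $v,l_{m+1},\dots,l_n$ arbitrary, $m$ the smallest integer with $i_{m+1}>u$ and $\bar c=\langle c_{i_1j_1},\dots,c_{i_mj_m}\rangle$ (if there is no such $m$, the equation is $\tau(c_{i_1j_1},\dots,c_{i_nj_n})=\tau(c_{i_1l_1},\dots,c_{i_nl_n})$). For such $\sigma$, $\iota(\sigma)=i_n$. For $\mathbf{a}\in[F]^{r,s}$, $M\models\sigma(\mathbf{a})$ means $\sigma$ holds in $M$ when each $c_{ij}$ occurring in $\sigma$ is replaced by $a_{ij}$. *)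

theory Defs
  imports Main "HOL-Library.Countable_Set"
begin

text \<open>Function symbols of type 'f (all symbols of the Skolemized language L^S),
  relation symbols of type 'r (all belong to L).  Variables are natural numbers.\<close>

datatype 'f trm = Var nat | Fn 'f "'f trm list"

datatype ('f, 'r) fm =
    Eq "'f trm" "'f trm"
  | Rel 'r "'f trm list"
  | Neg "('f, 'r) fm"
  | Conj "('f, 'r) fm" "('f, 'r) fm"
  | Ex nat "('f, 'r) fm"

fun wf_trm :: "('f \<Rightarrow> nat) \<Rightarrow> 'f trm \<Rightarrow> bool" where
  "wf_trm ar (Var n) = True"
| "wf_trm ar (Fn f ts) = (length ts = ar f \<and> (\<forall>t\<in>set ts. wf_trm ar t))"

fun trm_vars :: "'f trm \<Rightarrow> nat set" where
  "trm_vars (Var n) = {n}"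
| "trm_vars (Fn f ts) = (\<Union>t\<in>set ts. trm_vars t)"

fun trm_syms :: "'f trm \<Rightarrow> 'f set" where
  "trm_syms (Var n) = {}"
| "trm_syms (Fn f ts) = insert f (\<Union>t\<in>set ts. trm_syms t)"

fun wf_fm :: "('f \<Rightarrow> nat) \<Rightarrow> ('r \<Rightarrow> nat) \<Rightarrow> ('f, 'r) fm \<Rightarrow> bool" where
  "wf_fm ar rar (Eq s t) = (wf_trm ar s \<and> wf_trm ar t)"
| "wf_fm ar rar (Rel R ts) = (length ts = rar R \<and> (\<forall>t\<in>set ts. wf_trm ar t))"
| "wf_fm ar rar (Neg \<phi>) = wf_fm ar rar \<phi>"
| "wf_fm ar rar (Conj \<phi> \<psi>) = (wf_fm ar rar \<phi> \<and> wf_fm ar rar \<psi>)"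
| "wf_fm ar rar (Ex n \<phi>) = wf_fm ar rar \<phi>"

fun fm_syms :: "('f, 'r) fm \<Rightarrow> 'f set" where
  "fm_syms (Eq s t) = trm_syms s \<union> trm_syms t"
| "fm_syms (Rel R ts) = (\<Union>t\<in>set ts. trm_syms t)"
| "fm_syms (Neg \<phi>) = fm_syms \<phi>"
| "fm_syms (Conj \<phi> \<psi>) = fm_syms \<phi> \<union> fm_syms \<psi>"
| "fm_syms (Ex n \<phi>) = fm_syms \<phi>"

fun fv :: "('f, 'r) fm \<Rightarrow> nat set" where
  "fv (Eq s t) = trm_vars s \<union> trm_vars t"
| "fv (Rel R ts) = (\<Union>t\<in>set ts. trm_vars t)"
| "fv (Neg \<phi>) = fv \<phi>"
| "fv (Conj \<phi> \<psi>) = fv \<phi> \<union> fv \<psi>"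
| "fv (Ex n \<phi>) = fv \<phi> - {n}"

fun teval :: "('f \<Rightarrow> 'm list \<Rightarrow> 'm) \<Rightarrow> (nat \<Rightarrow> 'm) \<Rightarrow> 'f trm \<Rightarrow> 'm" where
  "teval fI w (Var n) = w n"
| "teval fI w (Fn f ts) = fI f (map (teval fI w) ts)"

text \<open>Satisfaction, with quantifiers relativised to a set A of elements
  (A = UNIV gives satisfaction in M itself).\<close>

fun sat_in :: "'m set \<Rightarrow> ('f \<Rightarrow> 'm list \<Rightarrow> 'm) \<Rightarrow> ('r \<Rightarrow> 'm list \<Rightarrow> bool)
    \<Rightarrow> (nat \<Rightarrow> 'm) \<Rightarrow> ('f, 'r) fm \<Rightarrow> bool" where
  "sat_in A fI rI w (Eq s t) = (teval fI w s = teval fI w t)"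
| "sat_in A fI rI w (Rel R ts) = rI R (map (teval fI w) ts)"
| "sat_in A fI rI w (Neg \<phi>) = (\<not> sat_in A fI rI w \<phi>)"
| "sat_in A fI rI w (Conj \<phi> \<psi>) = (sat_in A fI rI w \<phi> \<and> sat_in A fI rI w \<psi>)"
| "sat_in A fI rI w (Ex n \<phi>) = (\<exists>a\<in>A. sat_in A fI rI (w(n := a)) \<phi>)"

definition elem_sub :: "('f \<Rightarrow> nat) \<Rightarrow> ('r \<Rightarrow> nat) \<Rightarrow> ('f \<Rightarrow> 'm list \<Rightarrow> 'm)
    \<Rightarrow> ('r \<Rightarrow> 'm list \<Rightarrow> bool) \<Rightarrow> 'm set \<Rightarrow> 'm set \<Rightarrow> bool" where
  "elem_sub ar rar fI rI A B \<longleftrightarrow>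
     A \<noteq> {} \<and> A \<subseteq> B \<and>
     (\<forall>f as. length as = ar f \<and> set as \<subseteq> A \<longrightarrow> fI f as \<in> A) \<and>
     (\<forall>\<phi> w. wf_fm ar rar \<phi> \<and> range w \<subseteq> A \<longrightarrow>
        (sat_in A fI rI w \<phi> \<longleftrightarrow> sat_in B fI rI w \<phi>))"

text \<open>M is a model of T_skolem: every L-formula \<exists>x \<phi> has a Skolem function symbol
  (a non-L symbol of arity = number of free variables of \<exists>x \<phi>, taken in
  increasing order) interpreted as a Skolem function in M, and every symbol not in
  L is such a Skolem function symbol for some L-formula.\<close>

definition is_skolem_for :: "('f \<Rightarrow> nat) \<Rightarrow> ('f \<Rightarrow> 'm list \<Rightarrow> 'm)
    \<Rightarrow> ('r \<Rightarrow> 'm list \<Rightarrow> bool) \<Rightarrow> 'f \<Rightarrow> nat \<Rightarrow> ('f, 'r) fm \<Rightarrow> bool" where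
  "is_skolem_for ar fI rI g x \<phi> \<longleftrightarrow>
     (let ys = sorted_list_of_set (fv (Ex x \<phi>)) in
       ar g = length ys \<and>
       (\<forall>w. sat_in UNIV fI rI w (Ex x \<phi>) \<longrightarrow>
            sat_in UNIV fI rI (w(x := fI g (map w ys))) \<phi>))"

definition skolem_model :: "('f \<Rightarrow> bool) \<Rightarrow> ('f \<Rightarrow> nat) \<Rightarrow> ('r \<Rightarrow> nat)
    \<Rightarrow> ('f \<Rightarrow> 'm list \<Rightarrow> 'm) \<Rightarrow> ('r \<Rightarrow> 'm list \<Rightarrow> bool) \<Rightarrow> bool" where
  "skolem_model isL ar rar fI rI \<longleftrightarrow>
     (\<forall>x \<phi>. wf_fm ar rar \<phi> \<and> fm_syms \<phi> \<subseteq> Collect isL \<longrightarrow>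
        (\<exists>g. \<not> isL g \<and> is_skolem_for ar fI rI g x \<phi>)) \<and>
     (\<forall>g. \<not> isL g \<longrightarrow>
        (\<exists>x \<phi>. wf_fm ar rar \<phi> \<and> fm_syms \<phi> \<subseteq> Collect isL \<and> is_skolem_for ar fI rI g x \<phi>))"

definition strict_linorder :: "('m \<Rightarrow> 'm \<Rightarrow> bool) \<Rightarrow> bool" where
  "strict_linorder lt \<longleftrightarrow> (\<forall>x. \<not> lt x x) \<and> (\<forall>x y z. lt x y \<and> lt y z \<longrightarrow> lt x z)
     \<and> (\<forall>x y. x \<noteq> y \<longrightarrow> lt x y \<or> lt y x)"

definition init_seg :: "('m \<Rightarrow> 'm \<Rightarrow> bool) \<Rightarrow> 'm set \<Rightarrow> 'm set \<Rightarrow> bool" where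
  "init_seg lt A B \<longleftrightarrow> A \<subseteq> B \<and> (\<forall>a\<in>A. \<forall>b\<in>B. lt b a \<longrightarrow> b \<in> A)"

text \<open>The type 'o with its well-order represents the cardinal theta (as an initial
  ordinal): its elements are the ordinals below theta.\<close>

definition ozero :: "'o::wellorder" where "ozero = (LEAST i. True)"

definition olimit :: "'o::wellorder \<Rightarrow> bool" where
  "olimit d \<longleftrightarrow> d \<noteq> ozero \<and> (\<forall>i<d. \<exists>j. i < j \<and> j < d)"

definition strongly_inaccessible_type :: "'o::wellorder itself \<Rightarrow> bool" where
  "strongly_inaccessible_type _ \<longleftrightarrow>
     \<comment> \<open>the order type of 'o is an initial ordinal (a cardinal)\<close>
     (\<forall>i::'o. (card_of {j. j < i}, card_of (UNIV :: 'o set)) \<in> ordLess) \<and>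
     \<comment> \<open>uncountable\<close>
     \<not> countable (UNIV :: 'o set) \<and>
     \<comment> \<open>regular\<close>
     (\<forall>A::'o set. (card_of A, card_of (UNIV :: 'o set)) \<in> ordLess \<longrightarrow> (\<exists>i. \<forall>a\<in>A. a < i)) \<and>
     \<comment> \<open>strong limit\<close>
     (\<forall>A::'o set. (card_of A, card_of (UNIV :: 'o set)) \<in> ordLess \<longrightarrow>
        (card_of (Pow A), card_of (UNIV :: 'o set)) \<in> ordLess)"

definition theta_like :: "('m \<Rightarrow> 'm \<Rightarrow> bool) \<Rightarrow> 'o itself \<Rightarrow> bool" where
  "theta_like lt _ \<longleftrightarrow> (card_of (UNIV :: 'm set), card_of (UNIV :: 'o set)) \<in> ordIso \<and>
     (\<forall>I. init_seg lt I UNIV \<and> I \<noteq> UNIV \<longrightarrow> (card_of I, card_of (UNIV :: 'o set)) \<in> ordLess)"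

definition Fidx :: "('o::wellorder \<Rightarrow> 'm set) \<Rightarrow> 'm \<Rightarrow> 'o" where
  "Fidx Mc a = (LEAST i. a \<in> Mc i)"

text \<open>Elements of [F]^{r,s} are lists x of length s of lists of length r;
  x_{ij} is  x ! (i-1) ! (j-1).\<close>

definition incr_seqs :: "('m \<Rightarrow> 'm \<Rightarrow> bool) \<Rightarrow> nat \<Rightarrow> 'm set \<Rightarrow> 'm list set" where
  "incr_seqs lt r X = {xs. length xs = r \<and> set xs \<subseteq> X \<and> sorted_wrt lt xs}"

definition Fblocks :: "('m \<Rightarrow> 'm \<Rightarrow> bool) \<Rightarrow> ('m \<Rightarrow> 'o::wellorder) \<Rightarrow> nat \<Rightarrow> nat
    \<Rightarrow> 'm set \<Rightarrow> 'm list list set" where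
  "Fblocks lt F r s A = {x. length x = s \<and>
     (\<forall>i<s. x ! i \<in> incr_seqs lt r A) \<and>
     (\<forall>i<s. \<forall>j<r. \<forall>l<r. F (x ! i ! j) = F (x ! i ! l)) \<and>
     (\<forall>i. Suc i < s \<longrightarrow> F (x ! i ! 0) < F (x ! Suc i ! 0))}"

text \<open>A cardinal \<mu> < theta chosen by player I is represented by an ordinal
  m < theta, with \<mu> = |m| = card_of {j. j < m}; every cardinal below theta
  arises this way.  A strategy for II maps the history of I's moves
  (\<mu>_1,...,\<mu>_k) to II's answer: for k < e the value at ozero is \<beta>_k; for
  k = e the whole function i \<mapsto> \<beta>_{e+i} (i < theta, i = 0 giving \<beta>_e).
  Since the game is finite with perfect information, II has a winning strategy iff
  there is such a function winning against all sequences of moves of I.\<close>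

definition II_wins :: "('m \<Rightarrow> 'm \<Rightarrow> bool) \<Rightarrow> ('m \<Rightarrow> 'o::wellorder) \<Rightarrow> nat \<Rightarrow> nat \<Rightarrow> nat
    \<Rightarrow> 'm list list set \<Rightarrow> 'o list \<Rightarrow> (nat \<Rightarrow> 'o) \<Rightarrow> ('o \<Rightarrow> 'o) \<Rightarrow> bool" where
  "II_wins lt F r s e S mus bet tail \<longleftrightarrow>
     (\<forall>k. 1 \<le> k \<and> k < e \<longrightarrow> bet k < bet (Suc k)) \<and>
     bet e = tail ozero \<and> strict_mono tail \<and>
     (\<exists>X :: nat \<Rightarrow> 'm set. \<exists>Y :: 'o \<Rightarrow> 'm set.
        (\<forall>k\<in>{1..e}. X k \<subseteq> {a. F a = bet k} \<and>
             (card_of (X k), card_of {j. j < mus ! (k - 1)}) \<in> ordIso) \<and>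
        (\<forall>i. i \<noteq> ozero \<longrightarrow> Y i \<subseteq> {a. F a = tail i}) \<and>
        (\<forall>m::'o. \<exists>i. i \<noteq> ozero \<and> (card_of {j. j < m}, card_of (Y i)) \<in> ordLeq) \<and>
        (\<forall>x. length x = s \<and> (\<forall>k\<in>{1..e}. x ! (k - 1) \<in> incr_seqs lt r (X k)) \<and>
             drop e x \<in> Fblocks lt F r (s - e) (\<Union>i\<in>{i. i \<noteq> ozero}. Y i)
             \<longrightarrow> x \<in> S))"

definition superlarge :: "('m \<Rightarrow> 'm \<Rightarrow> bool) \<Rightarrow> ('m \<Rightarrow> 'o::wellorder) \<Rightarrow> nat \<Rightarrow> nat \<Rightarrow> nat
    \<Rightarrow> 'm list list set \<Rightarrow> bool" where
  "superlarge lt F r s e S \<longleftrightarrow>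
     S \<subseteq> Fblocks lt F r s UNIV \<and>
     (\<exists>strat :: 'o list \<Rightarrow> 'o \<Rightarrow> 'o. \<forall>mus. length mus = e \<longrightarrow>
        II_wins lt F r s e S mus (\<lambda>k. strat (take k mus) ozero) (strat mus))"

text \<open>A sentence of type Sigma*(iv) is given by a term tau whose variables
  0,...,n-1 stand for the constants c_{i_1 j_1},...,c_{i_n j_n} (list cs of index
  pairs), the constant c_{uv}, and the list ls = l_{m+1},...,l_n.\<close>

definition lexless :: "nat \<times> nat \<Rightarrow> nat \<times> nat \<Rightarrow> bool" where
  "lexless p q \<longleftrightarrow> fst p < fst q \<or> (fst p = fst q \<and> snd p < snd q)"

definition sig_m :: "(nat \<times> nat) list \<Rightarrow> nat \<Rightarrow> nat" where
  "sig_m cs u = length (takeWhile (\<lambda>c. fst c \<le> u) cs)"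

definition sig_cs' :: "(nat \<times> nat) list \<Rightarrow> nat \<Rightarrow> nat list \<Rightarrow> (nat \<times> nat) list" where
  "sig_cs' cs u ls = take (sig_m cs u) cs @ zip (map fst (drop (sig_m cs u) cs)) ls"

definition sigma_iv :: "('f \<Rightarrow> nat) \<Rightarrow> 'f trm \<Rightarrow> (nat \<times> nat) list \<Rightarrow> nat \<Rightarrow> nat \<Rightarrow> nat list \<Rightarrow> bool" where
  "sigma_iv ar tau cs u v ls \<longleftrightarrow>
     wf_trm ar tau \<and> trm_vars tau \<subseteq> {..<length cs} \<and>
     cs \<noteq> [] \<and> sorted_wrt lexless cs \<and> u < fst (last cs) \<and>
     length ls = length cs - sig_m cs u \<and>
     sorted_wrt lexless (sig_cs' cs u ls)"

definition iota :: "(nat \<times> nat) list \<Rightarrow> nat" where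
  "iota cs = fst (last cs)"

definition consts_bounded :: "nat \<Rightarrow> nat \<Rightarrow> (nat \<times> nat) list \<Rightarrow> nat \<Rightarrow> nat \<Rightarrow> nat list \<Rightarrow> bool" where
  "consts_bounded r s cs u v ls \<longleftrightarrow>
     (\<forall>(i, j)\<in>insert (u, v) (set cs \<union> set (sig_cs' cs u ls)).
        1 \<le> i \<and> i \<le> s \<and> 1 \<le> j \<and> j \<le> r)"

definition cval :: "'m list list \<Rightarrow> nat \<times> nat \<Rightarrow> 'm" where
  "cval x c = x ! (fst c - 1) ! (snd c - 1)"

definition sat_sigma :: "('f \<Rightarrow> 'm list \<Rightarrow> 'm) \<Rightarrow> ('m \<Rightarrow> 'm \<Rightarrow> bool) \<Rightarrow> 'f trm
    \<Rightarrow> (nat \<times> nat) list \<Rightarrow> nat \<Rightarrow> nat \<Rightarrow> nat list \<Rightarrow> 'm list list \<Rightarrow> bool" where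
  "sat_sigma fI lt tau cs u v ls x \<longleftrightarrow>
     (let lhs = teval fI (\<lambda>k. cval x (cs ! k)) tau;
          rhs = teval fI (\<lambda>k. cval x (sig_cs' cs u ls ! k)) tau
      in lt lhs (cval x (u, v)) \<longrightarrow> lhs = rhs)"

end

theory Submission
  imports Defs
begin

text \<open>
  II wins \<open>G(S', \<iota>(\<sigma>))\<close>, for the set \<open>S'\<close> of blocks of \<open>S\<close> satisfying \<open>\<sigma>\<close>, by simulating a
  winning strategy for \<open>G(S, e)\<close>: the first \<open>e\<close> levels are played as there, and the remaining
  levels up to \<open>\<iota>(\<sigma>)\<close> are taken from the tail of that strategy.  The cardinals requested for the
  rows beyond \<open>u\<close> are first inflated, using the Erdos--Rado theorem for the strongly inaccessible
  \<open>\<theta>\<close>.  Whenever \<open>\<tau>(c\<^sub>i\<^sub>j) < c\<^sub>u\<^sub>v\<close>, the value of \<open>\<tau>\<close> lies in the initial segment \<open>M\<^sub>\<beta>\<close>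
  below the \<open>u\<close>-th level, a set of size less than \<open>\<theta>\<close>.  So \<open>\<tau>\<close>, as a function of the constants
  beyond row \<open>u\<close>, is a colouring with few colours, and iterated Erdos--Rado yields homogeneous
  sets of the requested sizes.  On these, changing the constants beyond row \<open>u\<close> from \<open>c\<^sub>i\<^sub>j\<close>
  to \<open>c\<^sub>i\<^sub>l\<close> does not change \<open>\<tau>\<close>, which is the equation in \<open>\<sigma>\<close>.
\<close>

section \<open>Sets of size below \<theta>\<close>

unbundle cardinal_syntax

lemma card_of_Pow_mono: "|A| \<le>o |B| \<Longrightarrow> |Pow A| \<le>o |Pow B|"
proof -
  assume "|A| \<le>o |B|"
  then obtain f where f: "inj_on f A" "f ` A \<subseteq> B" using card_of_ordLeq[of A B] by auto
  have "inj_on (image f) (Pow A)" using f(1) by (auto simp: inj_on_def inj_on_image_eq_iff)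
  moreover have "image f ` Pow A \<subseteq> Pow B" using f(2) by auto
  ultimately show ?thesis using card_of_ordLeq by blast
qed

lemma ordLeq_ex_subset_ordIso: "|A| \<le>o |B| \<Longrightarrow> \<exists>B'\<subseteq>B. |B'| =o |A|"
  using internalize_card_of_ordLeq2[of A B] ordIso_symmetric by blast

definition small_below :: "'o::wellorder itself \<Rightarrow> 'a set \<Rightarrow> bool" where
  "small_below _ A \<longleftrightarrow> |A| <o |UNIV::'o set|"

locale inaccessible =
  fixes T :: "'o::wellorder itself"
  assumes inacc: "strongly_inaccessible_type T"
begin

abbreviation small :: "'a set \<Rightarrow> bool" where "small \<equiv> small_below T"

lemma small_def: "small A \<longleftrightarrow> |A| <o |UNIV::'o set|"
  by (simp add: small_below_def)

lemma initial_segment_ordLess_theta: "|{j::'o. j < i}| <o |UNIV::'o set|"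
  using inacc[unfolded strongly_inaccessible_type_def, THEN conjunct1] by (rule spec)

lemma uncountable_theta: "\<not> countable (UNIV :: 'o set)"
  using inacc[unfolded strongly_inaccessible_type_def] by (elim conjE)

lemma regular_theta: "|A::'o set| <o |UNIV::'o set| \<Longrightarrow> \<exists>i. \<forall>a\<in>A. a < i"
  using inacc[unfolded strongly_inaccessible_type_def] by (elim conjE) (erule allE, erule mp)

lemma strong_limit_theta: "|A::'o set| <o |UNIV::'o set| \<Longrightarrow> |Pow A| <o |UNIV::'o set|"
  using inacc[unfolded strongly_inaccessible_type_def] by (elim conjE) (erule allE, erule mp)

lemma small_initial_segment: "small {j::'o. j < i}"
  unfolding small_def by (rule initial_segment_ordLess_theta)

lemma infinite_theta: "infinite (UNIV::'o set)"
  using uncountable_theta countable_finite by blast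

lemma small_bounded: "small (A::'o set) \<Longrightarrow> \<exists>i. \<forall>a\<in>A. a < i"
  unfolding small_def by (rule regular_theta)

lemma small_ordLeq: "|B| \<le>o |A| \<Longrightarrow> small A \<Longrightarrow> small B"
  unfolding small_def using ordLeq_ordLess_trans by blast

lemma small_mono: "B \<subseteq> A \<Longrightarrow> small A \<Longrightarrow> small B"
  by (erule small_ordLeq[OF card_of_mono1])

lemma small_image: "small A \<Longrightarrow> small (f ` A)"
  by (rule small_ordLeq[OF card_of_image])

lemma small_finite: "finite A \<Longrightarrow> small A"
  unfolding small_def
  by (rule finite_ordLess_infinite[OF card_of_Well_order card_of_Well_order])
     (simp_all add: infinite_theta Field_card_of)

lemma small_Un: "small A \<Longrightarrow> small B \<Longrightarrow> small (A \<union> B)"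
  unfolding small_def by (rule card_of_Un_ordLess_infinite[OF infinite_theta])

lemma small_insert: "small A \<Longrightarrow> small (insert a A)"
  using small_Un[of "{a}" A] small_finite[of "{a}"] by simp

lemma small_Plus: "small A \<Longrightarrow> small B \<Longrightarrow> small (A <+> B)"
  unfolding small_def by (rule card_of_Plus_ordLess_infinite[OF infinite_theta])

lemma small_ordLeq_initial_segment: "small A \<Longrightarrow> \<exists>i::'o. |A| \<le>o |{j. j < i}|"
proof -
  assume A: "small A"
  hence "|A| \<le>o |UNIV::'o set|" unfolding small_def using ordLess_imp_ordLeq by blast
  then obtain f :: "_ \<Rightarrow> 'o" where f: "inj_on f A" using card_of_ordLeq[of A "UNIV::'o set"] by auto
  have "small (f ` A)" using A by (rule small_image)
  then obtain i where "\<forall>x\<in>f ` A. x < i" by (blast dest: small_bounded)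
  hence "f ` A \<subseteq> {j. j < i}" by auto
  thus ?thesis using f card_of_ordLeq by blast
qed

lemma small_Pow: "small A \<Longrightarrow> small (Pow A)"
proof -
  assume "small A"
  then obtain i::'o where "|A| \<le>o |{j. j < i}|" by (blast dest: small_ordLeq_initial_segment)
  hence "|Pow A| \<le>o |Pow {j. j < i}|" by (rule card_of_Pow_mono)
  moreover have "small (Pow {j::'o. j < i})"
    unfolding small_def by (rule strong_limit_theta[OF initial_segment_ordLess_theta])
  ultimately show ?thesis by (rule small_ordLeq)
qed

lemma small_ordLess_initial_segment: "small A \<Longrightarrow> \<exists>l::'o. |A| <o |{j. j < l}|"
proof -
  assume "small A"
  hence "small (Pow A)" by (rule small_Pow)
  then obtain l::'o where "|Pow A| \<le>o |{j. j < l}|" by (blast dest: small_ordLeq_initial_segment)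
  thus ?thesis using card_of_Pow[of A] ordLess_ordLeq_trans by blast
qed

lemma small_Times: "small A \<Longrightarrow> small B \<Longrightarrow> small (A \<times> B)"
proof -
  assume "small A" "small B"
  hence small: "small (Pow (A <+> B))" using small_Plus small_Pow by blast
  have "inj_on (\<lambda>(a,b). {Inl a, Inr b}) (A \<times> B)" by (rule inj_onI) (auto simp: doubleton_eq_iff)
  moreover have "(\<lambda>(a,b). {Inl a, Inr b}) ` (A \<times> B) \<subseteq> Pow (A <+> B)" by auto
  ultimately have "|A \<times> B| \<le>o |Pow (A <+> B)|" using card_of_ordLeq[of "A \<times> B"] by blast
  thus ?thesis using small by (rule small_ordLeq)
qed

lemma small_bounded_lists: "small A \<Longrightarrow> small {xs. set xs \<subseteq> A \<and> length xs \<le> N}"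
proof (induction N)
  case 0
  have "{xs. set xs \<subseteq> A \<and> length xs \<le> 0} \<subseteq> {[]}" by auto
  then show ?case using small_finite[of "{[]}"] small_mono by blast
next
  case (Suc N)
  let ?L = "{xs. set xs \<subseteq> A \<and> length xs \<le> N}"
  have "{xs. set xs \<subseteq> A \<and> length xs \<le> Suc N} \<subseteq> insert [] ((\<lambda>(a,xs). a # xs) ` (A \<times> ?L))"
  proof
    fix xs assume "xs \<in> {xs. set xs \<subseteq> A \<and> length xs \<le> Suc N}"
    thus "xs \<in> insert [] ((\<lambda>(a,xs). a # xs) ` (A \<times> ?L))" by (cases xs) auto
  qed
  moreover have "small (insert [] ((\<lambda>(a,xs). a # xs) ` (A \<times> ?L)))"
    using Suc by (intro small_insert small_image small_Times)
  ultimately show ?case by (rule small_mono)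
qed

lemma small_functions_into:
  assumes "small D" "small K"
  shows "small {f. \<forall>x. (x \<in> D \<longrightarrow> f x \<in> K) \<and> (x \<notin> D \<longrightarrow> f x = d)}"
proof -
  let ?F = "{f. \<forall>x. (x \<in> D \<longrightarrow> f x \<in> K) \<and> (x \<notin> D \<longrightarrow> f x = d)}"
  let ?graph = "\<lambda>f. (\<lambda>x. (x, f x)) ` D"
  have "inj_on ?graph ?F"
  proof (rule inj_onI)
    fix f1 f2 assume f: "f1 \<in> ?F" "f2 \<in> ?F" "?graph f1 = ?graph f2"
    show "f1 = f2"
    proof
      fix x show "f1 x = f2 x"
      proof (cases "x \<in> D")
        case True
        hence "(x, f1 x) \<in> ?graph f2" using f(3) by auto
        then show ?thesis by auto
      qed (use f(1,2) in auto)
    qed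
  qed
  moreover have "?graph ` ?F \<subseteq> Pow (D \<times> K)" by auto
  moreover have "small (Pow (D \<times> K))" using assms small_Times small_Pow by blast
  ultimately have "|?F| \<le>o |Pow (D \<times> K)|" using card_of_ordLeq[of ?F "Pow (D \<times> K)"] by blast
  thus ?thesis using \<open>small (Pow (D \<times> K))\<close> by (rule small_ordLeq)
qed

end

section \<open>Enumerating sets of ordinals\<close>

definition enum :: "'o::wellorder set \<Rightarrow> 'o \<Rightarrow> 'o" where
  "enum A = wfrec {(x,y). x < y} (\<lambda>f \<beta>. LEAST y. y \<in> A \<and> (\<forall>\<gamma><\<beta>. f \<gamma> < y))"

lemma enum_eq: "enum A \<beta> = (LEAST y. y \<in> A \<and> (\<forall>\<gamma><\<beta>. enum A \<gamma> < y))"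
proof -
  have "enum A \<beta> = (LEAST y. y \<in> A \<and> (\<forall>\<gamma><\<beta>. cut (enum A) {(x,y). x < y} \<beta> \<gamma> < y))"
    unfolding enum_def by (subst wfrec[OF wf]) (rule refl)
  also have "\<dots> = (LEAST y. y \<in> A \<and> (\<forall>\<gamma><\<beta>. enum A \<gamma> < y))"
    by (rule arg_cong[where f=Least]) (auto simp: cut_apply fun_eq_iff)
  finally show ?thesis .
qed

definition enum_dom :: "'o::wellorder set \<Rightarrow> 'o \<Rightarrow> bool" where
  "enum_dom A \<beta> \<longleftrightarrow> (\<exists>y\<in>A. \<forall>\<gamma><\<beta>. enum A \<gamma> < y)"

definition otype :: "'o::wellorder set \<Rightarrow> 'o" where
  "otype A = (LEAST \<beta>. \<not> enum_dom A \<beta>)"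

lemma enum_in: "enum_dom A \<beta> \<Longrightarrow> enum A \<beta> \<in> A \<and> (\<forall>\<gamma><\<beta>. enum A \<gamma> < enum A \<beta>)"
  unfolding enum_dom_def enum_eq[of A \<beta>] by (elim bexE) (rule LeastI, blast)

lemma enum_le: "y \<in> A \<Longrightarrow> \<forall>\<gamma><\<beta>. enum A \<gamma> < y \<Longrightarrow> enum A \<beta> \<le> y"
  unfolding enum_eq[of A \<beta>] by (rule Least_le) blast

lemma enum_dom_down: "\<gamma> \<le> \<beta> \<Longrightarrow> enum_dom A \<beta> \<Longrightarrow> enum_dom A \<gamma>"
  unfolding enum_dom_def by (meson less_le_trans)

lemma enum_mono: "\<gamma> < \<beta> \<Longrightarrow> enum_dom A \<beta> \<Longrightarrow> enum A \<gamma> < enum A \<beta>"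
  using enum_in by blast

lemma enum_less_iff: "enum_dom A \<beta> \<Longrightarrow> enum_dom A \<gamma> \<Longrightarrow> enum A \<gamma> < enum A \<beta> \<longleftrightarrow> \<gamma> < \<beta>"
  by (metis enum_mono linorder_neqE not_less_iff_gr_or_eq)

lemma enum_eq_iff: "enum_dom A \<beta> \<Longrightarrow> enum_dom A \<gamma> \<Longrightarrow> enum A \<gamma> = enum A \<beta> \<longleftrightarrow> \<gamma> = \<beta>"
  by (metis enum_mono linorder_neqE less_irrefl)

lemma enum_below_if_not_hit:
  assumes "y \<in> A" "\<forall>\<beta>. enum_dom A \<beta> \<longrightarrow> enum A \<beta> \<noteq> y"
  shows "enum_dom A \<beta> \<and> enum A \<beta> < y"
proof (induction \<beta> rule: less_induct)
  case (less \<beta>)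
  hence h: "\<forall>\<gamma><\<beta>. enum A \<gamma> < y" by blast
  hence d: "enum_dom A \<beta>" unfolding enum_dom_def using assms(1) by blast
  have "enum A \<beta> \<le> y" using enum_le[OF assms(1) h] .
  moreover have "enum A \<beta> \<noteq> y" using assms(2) d by blast
  ultimately show ?case using d by simp
qed

context inaccessible
begin

lemma inj_not_into_small: "inj (f :: 'o \<Rightarrow> 'a) \<Longrightarrow> range f \<subseteq> A \<Longrightarrow> \<not> small A"
proof
  assume "inj f" "range f \<subseteq> A" "small A"
  hence "|UNIV::'o set| \<le>o |A|" using card_of_ordLeq by blast
  thus False using \<open>small A\<close> unfolding small_def using not_ordLess_ordLeq by blast
qed

lemma enum_onto:
  assumes "y \<in> (A::'o set)"
  shows "\<exists>\<beta>. enum_dom A \<beta> \<and> enum A \<beta> = y"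
proof (rule ccontr)
  assume "\<not> ?thesis"
  hence h: "\<forall>\<beta>. enum_dom A \<beta> \<and> enum A \<beta> < y" using enum_below_if_not_hit[OF assms] by blast
  hence "inj (enum A)" by (intro injI) (use enum_eq_iff in blast)
  moreover have "range (enum A) \<subseteq> {j. j < y}" using h by blast
  ultimately show False using inj_not_into_small small_initial_segment by blast
qed

lemma small_ex_not_enum_dom:
  assumes "small (A::'o set)"
  shows "\<exists>\<beta>. \<not> enum_dom A \<beta>"
proof (rule ccontr)
  assume "\<not> ?thesis"
  hence h: "\<forall>\<beta>. enum_dom A \<beta>" by blast
  hence "inj (enum A)" by (intro injI) (use enum_eq_iff in blast)
  moreover have "range (enum A) \<subseteq> A" using h enum_in by blast
  ultimately show False using inj_not_into_small assms by blast
qed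

lemma enum_dom_iff_less_otype:
  assumes "small (A::'o set)"
  shows "enum_dom A \<beta> \<longleftrightarrow> \<beta> < otype A"
proof
  assume d: "enum_dom A \<beta>"
  have "\<not> enum_dom A (otype A)"
    unfolding otype_def using small_ex_not_enum_dom[OF assms] by (rule LeastI_ex)
  thus "\<beta> < otype A" using enum_dom_down[OF _ d] by (metis not_less)
next
  assume "\<beta> < otype A"
  thus "enum_dom A \<beta>" unfolding otype_def using not_less_Least by blast
qed

lemma enum_image_otype:
  assumes "small (A::'o set)"
  shows "enum A ` {\<beta>. \<beta> < otype A} = A"
  using enum_onto enum_in enum_dom_iff_less_otype[OF assms] by blast

lemma inj_on_enum:
  assumes "small (A::'o set)"
  shows "inj_on (enum A) {\<beta>. \<beta> < otype A}"
  by (rule inj_onI) (use enum_eq_iff enum_dom_iff_less_otype[OF assms] in blast)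

lemma enum_image_initial_segment:
  assumes "small (A::'o set)" "\<beta> < otype A"
  shows "enum A ` {\<gamma>. \<gamma> < \<beta>} = A \<inter> {z. z < enum A \<beta>}"
proof
  have d\<beta>: "enum_dom A \<beta>" using enum_dom_iff_less_otype[OF assms(1)] assms(2) by blast
  show "A \<inter> {z. z < enum A \<beta>} \<subseteq> enum A ` {\<gamma>. \<gamma> < \<beta>}"
  proof
    fix z assume z: "z \<in> A \<inter> {z. z < enum A \<beta>}"
    then obtain \<gamma> where g: "enum_dom A \<gamma>" "enum A \<gamma> = z" using enum_onto by blast
    hence "\<gamma> < \<beta>" using enum_less_iff[OF d\<beta> g(1)] z by blast
    thus "z \<in> enum A ` {\<gamma>. \<gamma> < \<beta>}" using g(2) by blast
  qed
  show "enum A ` {\<gamma>. \<gamma> < \<beta>} \<subseteq> A \<inter> {z. z < enum A \<beta>}"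
  proof
    fix z assume "z \<in> enum A ` {\<gamma>. \<gamma> < \<beta>}"
    then obtain \<gamma> where g: "\<gamma> < \<beta>" "z = enum A \<gamma>" by blast
    hence "enum_dom A \<gamma>" using enum_dom_down[OF less_imp_le[OF g(1)] d\<beta>] by blast
    thus "z \<in> A \<inter> {z. z < enum A \<beta>}" using enum_in enum_mono[OF g(1) d\<beta>] g(2) by blast
  qed
qed

lemma otype_ordIso:
  assumes "small (A::'o set)"
  shows "|{\<beta>. \<beta> < otype A}| =o |A|"
  using inj_on_enum[OF assms] enum_image_otype[OF assms]
  by (intro card_of_ordIsoI) (simp add: bij_betw_def)

lemma enum_dom_if_not_small:
  assumes "\<not> small (A::'o set)"
  shows "enum_dom A \<beta>"
proof (rule ccontr)
  assume nd: "\<not> enum_dom A \<beta>"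
  define d where "d = (LEAST \<beta>. \<not> enum_dom A \<beta>)"
  have nd': "\<not> enum_dom A d" unfolding d_def using nd by (rule LeastI)
  have "A \<subseteq> enum A ` {\<gamma>. \<gamma> < d}"
  proof
    fix y assume "y \<in> A"
    then obtain \<gamma> where g: "enum_dom A \<gamma>" "enum A \<gamma> = y" using enum_onto by blast
    have "\<gamma> < d" using g(1) nd' enum_dom_down by (metis linorder_not_less)
    thus "y \<in> enum A ` {\<gamma>. \<gamma> < d}" using g by blast
  qed
  hence "small A" using small_mono small_image small_initial_segment by metis
  thus False using assms by blast
qed

lemma not_small_atLeast: "\<not> small {j::'o. i \<le> j}"
proof
  assume "small {j::'o. i \<le> j}"
  hence "small ({j. j < i} \<union> {j::'o. i \<le> j})" using small_initial_segment small_Un by blast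
  moreover have "{j. j < i} \<union> {j::'o. i \<le> j} = UNIV" by auto
  ultimately have "small (UNIV::'o set)" by simp
  thus False unfolding small_def using ordLess_irreflexive by blast
qed

end

section \<open>The Erdos--Rado theorem\<close>

text \<open>The tree of the Erdos--Rado argument: \<open>y\<close> is an end-homogeneous predecessor of \<open>x\<close> if
  \<open>y\<close> and \<open>x\<close> get the same colour when added to any \<open>n\<close>-set of predecessors of \<open>y\<close>.\<close>

definition eh_pred :: "'o::wellorder set \<Rightarrow> ('o set \<Rightarrow> 'c) \<Rightarrow> nat \<Rightarrow> 'o \<Rightarrow> 'o set" where
  "eh_pred X c n = wfrec {(x,y). x < y} (\<lambda>f x. {y \<in> X. y < x \<and>
      (\<forall>s. s \<subseteq> f y \<and> finite s \<and> card s = n \<longrightarrow> c (insert y s) = c (insert x s))})"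

lemma eh_pred_eq: "eh_pred X c n x = {y \<in> X. y < x \<and>
      (\<forall>s. s \<subseteq> eh_pred X c n y \<and> finite s \<and> card s = n \<longrightarrow> c (insert y s) = c (insert x s))}"
proof -
  have "eh_pred X c n x = {y \<in> X. y < x \<and>
      (\<forall>s. s \<subseteq> cut (eh_pred X c n) {(x,y). x < y} x y \<and> finite s \<and> card s = n \<longrightarrow> c (insert y s) = c (insert x s))}"
    unfolding eh_pred_def by (subst wfrec[OF wf]) (rule refl)
  also have "\<dots> = {y \<in> X. y < x \<and>
      (\<forall>s. s \<subseteq> eh_pred X c n y \<and> finite s \<and> card s = n \<longrightarrow> c (insert y s) = c (insert x s))}"
    by (auto simp: cut_apply)
  finally show ?thesis .
qed

context
  fixes X :: "'o::wellorder set" and c :: "'o set \<Rightarrow> 'c" and n :: nat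
begin

lemma eh_pred_sub: "y \<in> eh_pred X c n x \<Longrightarrow> y \<in> X \<and> y < x"
  by (subst (asm) eh_pred_eq) blast

lemma eh_pred_hom: "y \<in> eh_pred X c n x \<Longrightarrow> s \<subseteq> eh_pred X c n y \<Longrightarrow> finite s \<Longrightarrow> card s = n \<Longrightarrow> c (insert y s) = c (insert x s)"
  by (subst (asm) eh_pred_eq) blast

lemma eh_predI: "y \<in> X \<Longrightarrow> y < x \<Longrightarrow> (\<And>s. s \<subseteq> eh_pred X c n y \<Longrightarrow> finite s \<Longrightarrow> card s = n \<Longrightarrow> c (insert y s) = c (insert x s))
   \<Longrightarrow> y \<in> eh_pred X c n x"
  by (subst eh_pred_eq) blast

lemma eh_pred_trans: "y \<in> eh_pred X c n x \<Longrightarrow> eh_pred X c n y \<subseteq> eh_pred X c n x"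
proof (induction y arbitrary: x rule: less_induct)
  case (less y)
  show ?case
  proof
    fix z assume z: "z \<in> eh_pred X c n y"
    have zy: "z \<in> X" "z < y" using eh_pred_sub[OF z] by auto
    have IH: "eh_pred X c n z \<subseteq> eh_pred X c n y" using less.IH[OF zy(2) z] .
    have yx: "y < x" using eh_pred_sub[OF less.prems] by simp
    show "z \<in> eh_pred X c n x"
    proof (rule eh_predI)
      show "z \<in> X" by fact
      show "z < x" using zy(2) yx by simp
      fix s assume s: "s \<subseteq> eh_pred X c n z" "finite s" "card s = n"
      have "c (insert z s) = c (insert y s)" using eh_pred_hom[OF z s] .
      also have "\<dots> = c (insert x s)" using eh_pred_hom[OF less.prems _ s(2,3)] s(1) IH by blast
      finally show "c (insert z s) = c (insert x s)" .
    qed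
  qed
qed

lemma eh_pred_linear: "y \<in> eh_pred X c n x \<Longrightarrow> z \<in> eh_pred X c n x \<Longrightarrow> z < y \<Longrightarrow> z \<in> eh_pred X c n y"
proof (induction z rule: less_induct)
  case (less z)
  show ?case
  proof (rule eh_predI)
    show "z \<in> X" using eh_pred_sub[OF less.prems(2)] by simp
    show "z < y" by fact
    fix s assume s: "s \<subseteq> eh_pred X c n z" "finite s" "card s = n"
    have sy: "s \<subseteq> eh_pred X c n y"
    proof
      fix w assume w: "w \<in> s"
      have wz: "w \<in> eh_pred X c n z" using w s(1) by blast
      have "w \<in> eh_pred X c n x" using eh_pred_trans[OF less.prems(2)] wz by blast
      moreover have "w < z" using eh_pred_sub[OF wz] by simp
      ultimately show "w \<in> eh_pred X c n y" using less.IH[OF \<open>w < z\<close> less.prems(1)] less.prems(3) by simp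
    qed
    have "c (insert z s) = c (insert x s)" using eh_pred_hom[OF less.prems(2) s] .
    also have "\<dots> = c (insert y s)" using eh_pred_hom[OF less.prems(1) sy s(2,3)] by simp
    finally show "c (insert z s) = c (insert y s)" .
  qed
qed

lemma eh_pred_initial: "y \<in> insert x (eh_pred X c n x) \<Longrightarrow> eh_pred X c n y = insert x (eh_pred X c n x) \<inter> {w. w < y}"
proof (cases "y = x")
  case True
  then show ?thesis using eh_pred_sub by auto
next
  case False
  assume y: "y \<in> insert x (eh_pred X c n x)"
  hence y': "y \<in> eh_pred X c n x" using False by simp
  have yx: "y < x" using eh_pred_sub[OF y'] by simp
  show ?thesis
  proof
    show "eh_pred X c n y \<subseteq> insert x (eh_pred X c n x) \<inter> {w. w < y}" using eh_pred_trans[OF y'] eh_pred_sub by blast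
    show "insert x (eh_pred X c n x) \<inter> {w. w < y} \<subseteq> eh_pred X c n y"
    proof
      fix w assume "w \<in> insert x (eh_pred X c n x) \<inter> {w. w < y}"
      hence "w \<in> eh_pred X c n x" "w < y" using yx by auto
      thus "w \<in> eh_pred X c n y" using eh_pred_linear[OF y'] by blast
    qed
  qed
qed

lemma eh_pred_hom_below: "y \<in> eh_pred X c n x \<Longrightarrow> s \<subseteq> eh_pred X c n x \<Longrightarrow> \<forall>w\<in>s. w < y \<Longrightarrow> finite s \<Longrightarrow> card s = n
   \<Longrightarrow> c (insert y s) = c (insert x s)"
proof -
  assume a: "y \<in> eh_pred X c n x" "s \<subseteq> eh_pred X c n x" "\<forall>w\<in>s. w < y" "finite s" "card s = n"
  have "s \<subseteq> eh_pred X c n y" using a(1,2,3) eh_pred_linear by blast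
  thus ?thesis using eh_pred_hom[OF a(1)] a(4,5) by blast
qed

lemma eh_pred_eqI:
  assumes "y1 \<in> X" "y2 \<in> X" "eh_pred X c n y1 = eh_pred X c n y2"
    and "\<And>s. s \<subseteq> eh_pred X c n y1 \<Longrightarrow> finite s \<Longrightarrow> card s = n \<Longrightarrow> c (insert y1 s) = c (insert y2 s)"
  shows "y1 = y2"
proof (rule ccontr)
  assume "y1 \<noteq> y2"
  then consider "y1 < y2" | "y2 < y1" by fastforce
  thus False
  proof cases
    case 1
    have "y1 \<in> eh_pred X c n y2" by (rule eh_predI[OF assms(1) 1]) (use assms(4) in blast)
    thus False using assms(3) eh_pred_sub by blast
  next
    case 2
    have "y2 \<in> eh_pred X c n y1" by (rule eh_predI[OF assms(2) 2]) (use assms(3,4) in fastforce)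
    thus False using assms(3) eh_pred_sub by blast
  qed
qed

end

definition otype_colouring :: "('o::wellorder set \<Rightarrow> 'c) \<Rightarrow> nat \<Rightarrow> 'o set \<Rightarrow> 'o set \<Rightarrow> 'c" where
  "otype_colouring c n A S =
     (if S \<subseteq> {\<beta>. \<beta> < otype A} \<and> finite S \<and> card S = Suc n then c (enum A ` S) else undefined)"

context inaccessible
begin

lemma otype_colouring_agree:
  fixes A1 A2 :: "'o set"
  assumes sm: "small A1" "small A2" and ot: "otype A1 = otype A2"
    and col: "otype_colouring c n A1 = otype_colouring c n A2"
    and \<beta>: "\<beta> < otype A1" and below: "\<And>\<gamma>. \<gamma> < \<beta> \<Longrightarrow> enum A1 \<gamma> = enum A2 \<gamma>"
    and s: "s \<subseteq> enum A1 ` {\<gamma>. \<gamma> < \<beta>}" "finite s" "card s = n"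
  shows "c (insert (enum A1 \<beta>) s) = c (insert (enum A2 \<beta>) s)"
proof -
  define S0 where "S0 = {\<gamma>. \<gamma> < \<beta> \<and> enum A1 \<gamma> \<in> s}"
  have S0_sub: "S0 \<subseteq> {\<gamma>. \<gamma> < otype A1}" using \<beta> unfolding S0_def by auto
  have img: "enum A1 ` S0 = s" using s(1) unfolding S0_def by blast
  have inj: "inj_on (enum A1) S0" using inj_on_subset[OF inj_on_enum[OF sm(1)] S0_sub] .
  have "finite S0" using finite_imageD[OF _ inj] img s(2) by simp
  moreover have "card S0 = n" using card_image[OF inj] img s(3) by simp
  moreover have "\<beta> \<notin> S0" unfolding S0_def by simp
  ultimately have T: "insert \<beta> S0 \<subseteq> {\<gamma>. \<gamma> < otype A1}" "finite (insert \<beta> S0)"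
      "card (insert \<beta> S0) = Suc n"
    using S0_sub \<beta> by auto
  have "c (insert (enum A1 \<beta>) s) = otype_colouring c n A1 (insert \<beta> S0)"
    unfolding otype_colouring_def using T img by simp
  also have "\<dots> = otype_colouring c n A2 (insert \<beta> S0)" using col by simp
  also have "\<dots> = c (enum A2 ` insert \<beta> S0)" unfolding otype_colouring_def using T ot by simp
  also have "enum A2 ` insert \<beta> S0 = insert (enum A2 \<beta>) s"
    using below img unfolding S0_def by auto
  finally show ?thesis .
qed

text \<open>A point of \<open>X\<close> is determined by the order type of its set of end-homogeneous predecessors
  together with the transported colouring; this is what bounds \<open>|X|\<close> in the Erdos--Rado
  argument.\<close>

lemma otype_colouring_inj:
  fixes X :: "'o set" and c :: "'o set \<Rightarrow> 'c" and n :: nat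
  defines "A \<equiv> \<lambda>x. insert x (eh_pred X c n x)"
  assumes x: "x1 \<in> X" "x2 \<in> X" and sm: "small (A x1)" "small (A x2)"
    and ot: "otype (A x1) = otype (A x2)"
    and col: "otype_colouring c n (A x1) = otype_colouring c n (A x2)"
  shows "x1 = x2"
proof -
  define d where "d = otype (A x1)"
  define e1 where "e1 = enum (A x1)"
  define e2 where "e2 = enum (A x2)"
  have AX: "\<And>x. x \<in> X \<Longrightarrow> A x \<subseteq> X" unfolding A_def using eh_pred_sub by blast
  have enum_agree: "\<beta> < d \<longrightarrow> e1 \<beta> = e2 \<beta>" for \<beta>
  proof (induction \<beta> rule: less_induct)
    case (less \<beta>)
    show ?case
    proof
      assume \<beta>d: "\<beta> < d"
      have IH: "\<And>\<gamma>. \<gamma> < \<beta> \<Longrightarrow> e1 \<gamma> = e2 \<gamma>" using less.IH \<beta>d by auto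
      have y1: "e1 \<beta> \<in> A x1"
        using enum_in enum_dom_iff_less_otype[OF sm(1)] \<beta>d unfolding d_def e1_def by blast
      have y2: "e2 \<beta> \<in> A x2"
        using enum_in enum_dom_iff_less_otype[OF sm(2)] \<beta>d unfolding d_def ot e2_def by blast
      have P1: "eh_pred X c n (e1 \<beta>) = e1 ` {\<gamma>. \<gamma> < \<beta>}"
        using eh_pred_initial[of "e1 \<beta>" x1 X c n] y1 enum_image_initial_segment[OF sm(1)] \<beta>d d_def
        unfolding A_def e1_def by simp
      have "eh_pred X c n (e2 \<beta>) = e2 ` {\<gamma>. \<gamma> < \<beta>}"
        using eh_pred_initial[of "e2 \<beta>" x2 X c n] y2 enum_image_initial_segment[OF sm(2)] \<beta>d d_def ot
        unfolding A_def e2_def by simp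
      also have "\<dots> = e1 ` {\<gamma>. \<gamma> < \<beta>}" using IH by auto
      finally have P2: "eh_pred X c n (e2 \<beta>) = e1 ` {\<gamma>. \<gamma> < \<beta>}" .
      show "e1 \<beta> = e2 \<beta>"
      proof (rule eh_pred_eqI)
        show "e1 \<beta> \<in> X" "e2 \<beta> \<in> X" using AX x y1 y2 by blast+
        show "eh_pred X c n (e1 \<beta>) = eh_pred X c n (e2 \<beta>)" using P1 P2 by (rule trans[OF _ sym])
        show "c (insert (e1 \<beta>) s) = c (insert (e2 \<beta>) s)"
          if "s \<subseteq> eh_pred X c n (e1 \<beta>)" "finite s" "card s = n" for s
        proof -
          have "s \<subseteq> e1 ` {\<gamma>. \<gamma> < \<beta>}" using that(1) P1 by simp
          from otype_colouring_agree[OF sm ot col \<beta>d[unfolded d_def] IH[unfolded e1_def e2_def] this[unfolded e1_def] that(2,3)]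
          show ?thesis unfolding e1_def e2_def .
        qed
      qed
    qed
  qed
  have "A x1 = e1 ` {\<beta>. \<beta> < d}" using enum_image_otype[OF sm(1)] d_def e1_def by simp
  also have "\<dots> = e2 ` {\<beta>. \<beta> < d}" using enum_agree by auto
  also have "\<dots> = A x2" using enum_image_otype[OF sm(2)] d_def ot e2_def by simp
  finally have "A x1 = A x2" .
  moreover have "x1 \<in> A x1" "x2 \<in> A x2" unfolding A_def by simp_all
  ultimately have "x1 \<in> A x2" "x2 \<in> A x1" by simp_all
  thus "x1 = x2" unfolding A_def using eh_pred_sub by (metis insert_iff less_asym)
qed


lemma otype_insert_less:
  fixes P B :: "'o set"
  assumes sm: "small (insert x P)" and P: "|P| \<le>o |B|"
    and L0: "|B <+> (UNIV::bool set)| <o |{j::'o. j < L0}|"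
  shows "otype (insert x P) < L0"
proof (rule ccontr)
  assume "\<not> otype (insert x P) < L0"
  hence "|{j. j < L0}| \<le>o |{j. j < otype (insert x P)}|" by (intro card_of_mono1) auto
  also have "|{j. j < otype (insert x P)}| =o |insert x P|" by (rule otype_ordIso[OF sm])
  also have "|insert x P| \<le>o |P <+> {x}|" using card_of_Un_Plus_ordLeq[of P "{x}"] by simp
  also have "|P <+> {x}| \<le>o |B <+> (UNIV::bool set)|"
  proof (rule card_of_Plus_mono[OF P])
    have "inj_on (\<lambda>_. True) {x} \<and> (\<lambda>_. True) ` {x} \<subseteq> (UNIV::bool set)" by simp
    thus "|{x}| \<le>o |UNIV::bool set|" using card_of_ordLeq by blast
  qed
  finally have "|{j. j < L0}| <o |{j. j < L0}|" using L0 by (rule ordLeq_ordLess_trans)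
  thus False using ordLess_irreflexive by blast
qed

lemma otype_colouring_mem:
  fixes A X :: "'o set"
  assumes sm: "small A" and AX: "A \<subseteq> X" and ot: "otype A < L0"
    and col: "\<forall>s. s \<subseteq> X \<and> finite s \<and> card s = Suc n \<longrightarrow> c s \<in> K"
  shows "otype_colouring c n A \<in>
    {g. \<forall>S. (S \<in> Pow {j. j < L0} \<longrightarrow> g S \<in> insert undefined K) \<and> (S \<notin> Pow {j. j < L0} \<longrightarrow> g S = undefined)}"
proof (intro CollectI allI conjI impI)
  fix S assume "S \<in> Pow {j. j < L0}"
  show "otype_colouring c n A S \<in> insert undefined K"
  proof (cases "S \<subseteq> {\<beta>. \<beta> < otype A} \<and> finite S \<and> card S = Suc n")
    case True
    have inj: "inj_on (enum A) S" using inj_on_subset[OF inj_on_enum[OF sm]] True by blast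
    have "enum A ` S \<subseteq> X" using True enum_image_otype[OF sm] AX by blast
    moreover have "card (enum A ` S) = Suc n" using True card_image[OF inj] by simp
    ultimately have "c (enum A ` S) \<in> K" using col True by blast
    thus ?thesis unfolding otype_colouring_def using True by simp
  next
    case False thus ?thesis unfolding otype_colouring_def by (simp only: if_False) simp
  qed
next
  fix S assume "S \<notin> Pow {j. j < L0}"
  hence "\<not> S \<subseteq> {\<beta>. \<beta> < otype A}" using ot by auto
  thus "otype_colouring c n A S = undefined" unfolding otype_colouring_def by simp
qed

text \<open>Counting argument: if all end-homogeneous predecessor sets are below \<open>|ln|\<close>, then \<open>X\<close> injects
  into the small set of pairs (order type, transported colouring), so a large enough \<open>X\<close> has a point
  with at least \<open>|ln|\<close> end-homogeneous predecessors.\<close>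

lemma ex_large_eh_pred:
  fixes K :: "'c set" and ln :: 'o
  assumes K: "small K"
  shows "\<exists>l::'o. \<forall>(X::'o set) c. |{j. j < l}| \<le>o |X| \<longrightarrow>
    (\<forall>s. s \<subseteq> X \<and> finite s \<and> card s = Suc n \<longrightarrow> c s \<in> K) \<longrightarrow>
    (\<exists>x\<in>X. |{j. j < ln}| \<le>o |eh_pred X c n x| )"
proof -
  have "small ({j. j < ln} <+> (UNIV::bool set))"
    by (rule small_Plus[OF small_initial_segment small_finite]) simp
  then obtain L0 :: 'o where L0: "|{j. j < ln} <+> (UNIV::bool set)| <o |{j. j < L0}|"
    using small_ordLess_initial_segment by blast
  define Gs :: "('o set \<Rightarrow> 'c) set" where "Gs = {g. \<forall>S. (S \<in> Pow {j. j < L0} \<longrightarrow> g S \<in> insert undefined K) \<and>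
       (S \<notin> Pow {j. j < L0} \<longrightarrow> g S = undefined)}"
  have "small Gs" unfolding Gs_def
    by (rule small_functions_into) (simp_all add: small_Pow small_initial_segment small_insert K)
  hence "small ({j. j < L0} \<times> Gs)" using small_initial_segment small_Times by blast
  then obtain l :: 'o where l: "|{j. j < L0} \<times> Gs| <o |{j. j < l}|"
    using small_ordLess_initial_segment by blast
  have bound: "|X| \<le>o |{j. j < L0} \<times> Gs|"
    if col: "\<forall>s. s \<subseteq> X \<and> finite s \<and> card s = Suc n \<longrightarrow> c s \<in> K"
      and sm: "\<forall>x\<in>X. |eh_pred X c n x| <o |{j. j < ln}|" for X :: "'o set" and c :: "'o set \<Rightarrow> 'c"
  proof -
    define A where "A = (\<lambda>x. insert x (eh_pred X c n x))"
    have AX: "A x \<subseteq> X" if "x \<in> X" for x unfolding A_def using eh_pred_sub that by blast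
    have le: "|eh_pred X c n x| \<le>o |{j. j < ln}|" if "x \<in> X" for x
      using sm that ordLess_imp_ordLeq by blast
    have smA: "small (A x)" if "x \<in> X" for x
      unfolding A_def by (rule small_insert, rule small_ordLeq[OF le[OF that] small_initial_segment])
    have ot: "otype (A x) < L0" if "x \<in> X" for x
      unfolding A_def by (rule otype_insert_less[OF smA[OF that, unfolded A_def] le[OF that] L0])
    define code where "code = (\<lambda>x. (otype (A x), otype_colouring c n (A x)))"
    have "code ` X \<subseteq> {j. j < L0} \<times> Gs"
      unfolding code_def Gs_def using otype_colouring_mem[OF smA AX ot col] ot by blast
    moreover have "inj_on code X"
    proof (rule inj_onI)
      fix x1 x2 assume x: "x1 \<in> X" "x2 \<in> X" "code x1 = code x2"
      show "x1 = x2"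
        by (rule otype_colouring_inj[of x1 X x2 c n]) (use x smA in \<open>simp_all add: code_def A_def\<close>)
    qed
    ultimately show ?thesis using card_of_ordLeq[of X] by blast
  qed
  have "\<exists>x\<in>X. |{j. j < ln}| \<le>o |eh_pred X c n x|"
    if X: "|{j. j < l}| \<le>o |X|" and col: "\<forall>s. s \<subseteq> X \<and> finite s \<and> card s = Suc n \<longrightarrow> c s \<in> K"
    for X :: "'o set" and c
  proof (rule ccontr)
    assume "\<not> (\<exists>x\<in>X. |{j. j < ln}| \<le>o |eh_pred X c n x| )"
    hence "\<forall>x\<in>X. |eh_pred X c n x| <o |{j. j < ln}|"
      using not_ordLeq_iff_ordLess[OF card_of_Well_order card_of_Well_order] by blast
    hence "|X| \<le>o |{j. j < L0} \<times> Gs|" by (rule bound[OF col])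
    hence "|X| <o |{j. j < l}|" using l by (rule ordLeq_ordLess_trans)
    thus False using X not_ordLess_ordLeq by blast
  qed
  thus ?thesis by blast
qed

end

definition partition_arrow :: "'o::wellorder \<Rightarrow> 'o \<Rightarrow> nat \<Rightarrow> 'c set \<Rightarrow> bool" where
  "partition_arrow l m n K \<longleftrightarrow> (\<forall>(X::'o set) (c::'o set \<Rightarrow> 'c). |{j. j < l}| \<le>o |X| \<longrightarrow>
    (\<forall>s. s \<subseteq> X \<and> finite s \<and> card s = n \<longrightarrow> c s \<in> K) \<longrightarrow>
    (\<exists>H\<subseteq>X. |{j. j < m}| \<le>o |H| \<and>
      (\<forall>s t. s \<subseteq> H \<longrightarrow> t \<subseteq> H \<longrightarrow> finite s \<longrightarrow> finite t \<longrightarrow> card s = n \<longrightarrow> card t = n \<longrightarrow> c s = c t)))"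

lemma eh_pred_colour_Max:
  assumes H: "H \<subseteq> eh_pred X c n x" and t: "t \<subseteq> H" "finite t" "card t = Suc n"
  shows "c t = c (insert x (t - {Max t}))"
proof -
  have "t \<noteq> {}" using t by auto
  define y where "y = Max t"
  have yt: "y \<in> t" unfolding y_def using Max_in[OF t(2) \<open>t \<noteq> {}\<close>] .
  have "c t = c (insert y (t - {y}))" using yt by (simp add: insert_absorb)
  also have "\<dots> = c (insert x (t - {y}))"
  proof (rule eh_pred_hom_below)
    show "y \<in> eh_pred X c n x" "t - {y} \<subseteq> eh_pred X c n x" using yt t(1) H by blast+
    show "\<forall>w\<in>t - {y}. w < y"
    proof
      fix w assume w: "w \<in> t - {y}"
      hence "w \<le> y" unfolding y_def using Max_ge[OF t(2)] by blast
      thus "w < y" using w by (auto simp: order_less_le)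
    qed
    show "finite (t - {y})" "card (t - {y}) = n" using t(2,3) yt by simp_all
  qed
  finally show ?thesis unfolding y_def .
qed

context inaccessible
begin

theorem erdos_rado:
  fixes K :: "'c set" and m :: 'o
  assumes K: "small K"
  shows "\<exists>l::'o. partition_arrow l m n K"
proof (induction n)
  case 0
  have "partition_arrow m m 0 K" unfolding partition_arrow_def by auto
  thus ?case by (rule exI)
next
  case (Suc n)
  then obtain ln :: 'o where ln: "partition_arrow ln m n K" by (elim exE)
  obtain l :: 'o where l: "\<forall>(X::'o set) c. |{j. j < l}| \<le>o |X| \<longrightarrow>
      (\<forall>s. s \<subseteq> X \<and> finite s \<and> card s = Suc n \<longrightarrow> c s \<in> K) \<longrightarrow>
      (\<exists>x\<in>X. |{j. j < ln}| \<le>o |eh_pred X c n x| )"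
    using ex_large_eh_pred[OF K, where ln = ln and n = n] by (elim exE) (rule that)
  have "partition_arrow l m (Suc n) K" unfolding partition_arrow_def
  proof (intro allI impI)
    fix X :: "'o set" and c :: "'o set \<Rightarrow> 'c"
    assume X: "|{j. j < l}| \<le>o |X|" and col: "\<forall>s. s \<subseteq> X \<and> finite s \<and> card s = Suc n \<longrightarrow> c s \<in> K"
    obtain x where x: "x \<in> X" "|{j. j < ln}| \<le>o |eh_pred X c n x|"
      using mp[OF mp[OF spec[OF spec[OF l, of X], of c] X] col] by blast
    define c' where "c' = (\<lambda>s. c (insert x s))"
    have c': "\<forall>s. s \<subseteq> eh_pred X c n x \<and> finite s \<and> card s = n \<longrightarrow> c' s \<in> K"
    proof (intro allI impI)
      fix s assume s: "s \<subseteq> eh_pred X c n x \<and> finite s \<and> card s = n"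
      have "x \<notin> s" using s eh_pred_sub by blast
      moreover have "insert x s \<subseteq> X" using s eh_pred_sub x(1) by blast
      ultimately show "c' s \<in> K" unfolding c'_def using col s by simp
    qed
    obtain H where H: "H \<subseteq> eh_pred X c n x" "|{j. j < m}| \<le>o |H|"
      "\<And>s t. s \<subseteq> H \<Longrightarrow> t \<subseteq> H \<Longrightarrow> finite s \<Longrightarrow> finite t \<Longrightarrow> card s = n \<Longrightarrow> card t = n \<Longrightarrow> c' s = c' t"
      using mp[OF mp[OF spec[OF spec[OF ln[unfolded partition_arrow_def], of "eh_pred X c n x"], of c'] x(2)] c'] by blast
    show "\<exists>H\<subseteq>X. |{j. j < m}| \<le>o |H| \<and>
      (\<forall>s t. s \<subseteq> H \<longrightarrow> t \<subseteq> H \<longrightarrow> finite s \<longrightarrow> finite t \<longrightarrow> card s = Suc n \<longrightarrow> card t = Suc n \<longrightarrow> c s = c t)"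
    proof (intro exI conjI allI impI)
      show "H \<subseteq> X" using H(1) eh_pred_sub by blast
      show "|{j. j < m}| \<le>o |H|" by (rule H(2))
      fix s t assume st: "s \<subseteq> H" "t \<subseteq> H" "finite s" "finite t" "card s = Suc n" "card t = Suc n"
      have ne: "s \<noteq> {}" "t \<noteq> {}" using st by auto
      have "c s = c' (s - {Max s})" unfolding c'_def by (rule eh_pred_colour_Max[OF H(1) st(1,3,5)])
      also have "\<dots> = c' (t - {Max t})"
      proof (rule H(3))
        show "s - {Max s} \<subseteq> H" "t - {Max t} \<subseteq> H" using st(1,2) by auto
        show "finite (s - {Max s})" "finite (t - {Max t})" using st(3,4) by auto
        show "card (s - {Max s}) = n" using card_Diff_singleton[OF Max_in[OF st(3) ne(1)]] st(5) by simp
        show "card (t - {Max t}) = n" using card_Diff_singleton[OF Max_in[OF st(4) ne(2)]] st(6) by simp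
      qed
      also have "\<dots> = c t" unfolding c'_def by (rule eh_pred_colour_Max[OF H(1) st(2,4,6), symmetric])
      finally show "c s = c t" .
    qed
  qed
  thus ?case by (rule exI)
qed

end

definition arrow_bound :: "nat \<Rightarrow> 'c set \<Rightarrow> 'o::wellorder \<Rightarrow> 'o" where
  "arrow_bound n K m = (SOME l. partition_arrow l m n K)"

lemma (in inaccessible) partition_arrow_bound:
  "small K \<Longrightarrow> partition_arrow (arrow_bound n K (m::'o)) m n K"
proof -
  assume "small K"
  hence "\<exists>l. partition_arrow l m n K" by (rule erdos_rado)
  thus ?thesis unfolding arrow_bound_def by (rule someI_ex)
qed

section \<open>Iterated Erdos--Rado\<close>

definition bounded_prefixes :: "nat \<Rightarrow> 'o::wellorder \<Rightarrow> 'o set list set" where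
  "bounded_prefixes N B = {ds. length ds \<le> N \<and> (\<forall>d\<in>set ds. d \<subseteq> {i. i < B})}"

definition prefix_colourings :: "nat \<Rightarrow> 'o::wellorder \<Rightarrow> 'c set \<Rightarrow> ('o set list \<Rightarrow> 'c) set" where
  "prefix_colourings N B K =
     {f. \<forall>x. (x \<in> bounded_prefixes N B \<longrightarrow> f x \<in> K) \<and> (x \<notin> bounded_prefixes N B \<longrightarrow> f x = undefined)}"

definition fits_sizes :: "nat \<Rightarrow> (nat \<Rightarrow> nat) \<Rightarrow> (nat \<Rightarrow> 'o set) \<Rightarrow> 'o set list \<Rightarrow> bool" where
  "fits_sizes q nn H ds \<longleftrightarrow>
     length ds = q \<and> (\<forall>k<q. ds ! k \<subseteq> H k \<and> finite (ds ! k) \<and> card (ds ! k) = nn k)"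

lemma fits_sizes_Suc:
  assumes "fits_sizes (Suc q) nn (H(q := Hq)) ds"
  shows "ds = take q ds @ [ds ! q]" "fits_sizes q nn H (take q ds)"
    "ds ! q \<subseteq> Hq" "finite (ds ! q)" "card (ds ! q) = nn q"
proof -
  have len: "length ds = Suc q"
    and all: "\<forall>k<Suc q. ds ! k \<subseteq> (H(q := Hq)) k \<and> finite (ds ! k) \<and> card (ds ! k) = nn k"
    using assms unfolding fits_sizes_def by simp_all
  from len show "ds = take q ds @ [ds ! q]" by (metis lessI take_Suc_conv_app_nth take_all order_refl)
  show "fits_sizes q nn H (take q ds)" unfolding fits_sizes_def
  proof (intro conjI allI impI)
    show "length (take q ds) = q" using len by simp
    fix k assume k: "k < q"
    hence "ds ! k \<subseteq> (H(q := Hq)) k \<and> finite (ds ! k) \<and> card (ds ! k) = nn k"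
      using all less_SucI by blast
    thus "take q ds ! k \<subseteq> H k" "finite (take q ds ! k)" "card (take q ds ! k) = nn k" using k by simp_all
  qed
  have "ds ! q \<subseteq> (H(q := Hq)) q \<and> finite (ds ! q) \<and> card (ds ! q) = nn q" using all by blast
  thus "ds ! q \<subseteq> Hq" "finite (ds ! q)" "card (ds ! q) = nn q" by simp_all
qed

lemma fits_sizes_bounded_prefix:
  assumes "fits_sizes q nn H ds" "\<forall>k<q. H k \<subseteq> {i. i < lsz k} \<and> lsz k \<le> B"
    and "length d0 + q \<le> N" "\<forall>d\<in>set d0. d \<subseteq> {i. i < b0}" "b0 \<le> B"
  shows "d0 @ ds \<in> bounded_prefixes N B"
proof -
  have "\<forall>d\<in>set ds. d \<subseteq> {i. i < B}"
  proof
    fix d assume "d \<in> set ds"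
    then obtain k where "k < q" "d = ds ! k" using assms(1) unfolding fits_sizes_def by (auto simp: in_set_conv_nth)
    hence "d \<subseteq> {i. i < lsz k}" "lsz k \<le> B" using assms(1,2) unfolding fits_sizes_def by blast+
    thus "d \<subseteq> {i. i < B}" by (auto intro: order_less_le_trans)
  qed
  moreover have "\<forall>d\<in>set d0. d \<subseteq> {i. i < B}" using assms(4,5) by (auto intro: order_less_le_trans)
  ultimately show ?thesis using assms(1,3) unfolding bounded_prefixes_def fits_sizes_def by auto
qed

context inaccessible
begin

lemma small_bounded_prefixes: "small (bounded_prefixes N (B::'o))"
proof (rule small_mono)
  show "bounded_prefixes N B \<subseteq> {xs. set xs \<subseteq> Pow {i. i < B} \<and> length xs \<le> N}"
    unfolding bounded_prefixes_def by auto
qed (rule small_bounded_lists[OF small_Pow[OF small_initial_segment]])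

lemma small_prefix_colourings: "small K \<Longrightarrow> small (prefix_colourings N (B::'o) K)"
  unfolding prefix_colourings_def by (rule small_functions_into[OF small_bounded_prefixes])

lemma homogeneous_last_entry:
  fixes V :: "'o set list \<Rightarrow> 'c"
  assumes smK: "small K" and VK: "\<forall>ds. V ds \<in> K"
  shows "\<exists>Hq A0. Hq \<subseteq> {i. i < arrow_bound n (prefix_colourings N B K) m} \<and> |{j. j < m}| \<le>o |Hq| \<and>
    (\<forall>pre\<in>bounded_prefixes N B. \<forall>A. A \<subseteq> Hq \<and> finite A \<and> card A = n \<longrightarrow> V (pre @ [A]) = V (pre @ [A0]))"
proof -
  define l where "l = arrow_bound n (prefix_colourings N B K) m"
  define chi where "chi = (\<lambda>A pre. if pre \<in> bounded_prefixes N B then V (pre @ [A]) else undefined)"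
  have chiK: "\<forall>s. s \<subseteq> {i. i < l} \<and> finite s \<and> card s = n \<longrightarrow> chi s \<in> prefix_colourings N B K"
    unfolding chi_def prefix_colourings_def using VK by auto
  have "partition_arrow l m n (prefix_colourings N B K)"
    unfolding l_def by (rule partition_arrow_bound[OF small_prefix_colourings[OF smK]])
  from mp[OF mp[OF spec[OF spec[OF this[unfolded partition_arrow_def], of "{i. i < l}"], of chi]
       ordLeq_reflexive[OF card_of_Well_order]] chiK]
  obtain Hq where Hq: "Hq \<subseteq> {i. i < l}" "|{j. j < m}| \<le>o |Hq|"
    "\<And>s t. s \<subseteq> Hq \<Longrightarrow> t \<subseteq> Hq \<Longrightarrow> finite s \<Longrightarrow> finite t \<Longrightarrow> card s = n \<Longrightarrow> card t = n \<Longrightarrow> chi s = chi t"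
    by blast
  define A0 where "A0 = (SOME A. A \<subseteq> Hq \<and> finite A \<and> card A = n)"
  have "V (pre @ [A]) = V (pre @ [A0])"
    if "pre \<in> bounded_prefixes N B" "A \<subseteq> Hq \<and> finite A \<and> card A = n" for pre A
  proof -
    have "A0 \<subseteq> Hq \<and> finite A0 \<and> card A0 = n" unfolding A0_def using that(2) by (rule someI)
    hence "chi A = chi A0" using Hq(3) that(2) by blast
    thus ?thesis using that(1) unfolding chi_def by (metis (no_types))
  qed
  thus ?thesis using Hq(1,2) unfolding l_def by blast
qed

text \<open>Entry \<open>k\<close> of the last \<open>q\<close> entries is an \<open>nn k\<close>-subset of \<open>H k\<close>, and \<open>lsz k\<close> is the arrow bound
  for colourings of the prefixes before it, all of whose entries lie below \<open>Bnd k\<close>.\<close>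

theorem iterated_erdos_rado:
  fixes V :: "'o set list \<Rightarrow> 'c" and D0 :: "'o set list set" and nn :: "nat \<Rightarrow> nat"
    and mm lsz Bnd :: "nat \<Rightarrow> 'o" and b0 :: 'o and K :: "'c set" and N :: nat
  assumes smK: "small K" and VK: "\<forall>ds. V ds \<in> K"
    and lsz: "\<forall>k<q. lsz k = arrow_bound (nn k) (prefix_colourings N (Bnd k) K) (mm k)"
    and Bnd: "\<forall>k<q. b0 \<le> Bnd k \<and> (\<forall>j<k. lsz j \<le> Bnd k)"
    and D0: "\<forall>d0\<in>D0. length d0 + q \<le> N \<and> (\<forall>d\<in>set d0. d \<subseteq> {i. i < b0})"
  shows "\<exists>H. (\<forall>k<q. H k \<subseteq> {i. i < lsz k} \<and> |{j. j < mm k}| \<le>o |H k| ) \<and>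
    (\<forall>d0\<in>D0. \<forall>ds ds'. fits_sizes q nn H ds \<longrightarrow> fits_sizes q nn H ds' \<longrightarrow> V (d0 @ ds) = V (d0 @ ds'))"
  using VK D0 lsz Bnd
proof (induction q arbitrary: V)
  case 0
  show ?case by (rule exI[of _ "\<lambda>_. {}"]) (simp add: fits_sizes_def)
next
  case (Suc q)
  obtain Hq A0 where Hq: "Hq \<subseteq> {i. i < lsz q}" "|{j. j < mm q}| \<le>o |Hq|"
    and last: "\<And>pre A. pre \<in> bounded_prefixes N (Bnd q) \<Longrightarrow> A \<subseteq> Hq \<and> finite A \<and> card A = nn q \<Longrightarrow>
        V (pre @ [A]) = V (pre @ [A0])"
    using homogeneous_last_entry[OF smK Suc.prems(1), of "nn q" N "Bnd q" "mm q"] Suc.prems(3) by auto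
  define V' where "V' = (\<lambda>pre. V (pre @ [A0]))"
  have "\<exists>H. (\<forall>k<q. H k \<subseteq> {i. i < lsz k} \<and> |{j. j < mm k}| \<le>o |H k| ) \<and>
    (\<forall>d0\<in>D0. \<forall>ds ds'. fits_sizes q nn H ds \<longrightarrow> fits_sizes q nn H ds' \<longrightarrow> V' (d0 @ ds) = V' (d0 @ ds'))"
  proof (rule Suc.IH)
    show "\<forall>ds. V' ds \<in> K" unfolding V'_def using Suc.prems(1) by simp
    show "\<forall>d0\<in>D0. length d0 + q \<le> N \<and> (\<forall>d\<in>set d0. d \<subseteq> {i. i < b0})" using Suc.prems(2) by auto
    show "\<forall>k<q. lsz k = arrow_bound (nn k) (prefix_colourings N (Bnd k) K) (mm k)" using Suc.prems(3) by simp
    show "\<forall>k<q. b0 \<le> Bnd k \<and> (\<forall>j<k. lsz j \<le> Bnd k)" using Suc.prems(4) by simp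
  qed
  then obtain H where H: "\<forall>k<q. H k \<subseteq> {i. i < lsz k} \<and> |{j. j < mm k}| \<le>o |H k|"
    "\<forall>d0\<in>D0. \<forall>ds ds'. fits_sizes q nn H ds \<longrightarrow> fits_sizes q nn H ds' \<longrightarrow> V' (d0 @ ds) = V' (d0 @ ds')"
    by blast
  have last_coord: "V (d0 @ ds) = V' (d0 @ take q ds)"
    if d0: "d0 \<in> D0" and ds: "fits_sizes (Suc q) nn (H(q := Hq)) ds" for d0 ds
  proof -
    note ds' = fits_sizes_Suc[OF ds]
    have "d0 @ take q ds \<in> bounded_prefixes N (Bnd q)"
    proof (rule fits_sizes_bounded_prefix[OF ds'(2)])
      show "\<forall>k<q. H k \<subseteq> {i. i < lsz k} \<and> lsz k \<le> Bnd q" using H(1) Suc.prems(4) by simp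
      show "length d0 + q \<le> N" using Suc.prems(2) d0 by auto
      show "\<forall>d\<in>set d0. d \<subseteq> {i. i < b0}" "b0 \<le> Bnd q" using Suc.prems(2,4) d0 by simp_all
    qed
    hence "V ((d0 @ take q ds) @ [ds ! q]) = V' (d0 @ take q ds)"
      unfolding V'_def using last ds'(3-5) by blast
    thus ?thesis using ds'(1) by (metis append_assoc)
  qed
  have "\<forall>k<Suc q. (H(q := Hq)) k \<subseteq> {i. i < lsz k} \<and> |{j. j < mm k}| \<le>o |(H(q := Hq)) k|"
    using H(1) Hq(1,2) by (auto simp: less_Suc_eq)
  moreover have "\<forall>d0\<in>D0. \<forall>ds ds'. fits_sizes (Suc q) nn (H(q := Hq)) ds \<longrightarrow>
      fits_sizes (Suc q) nn (H(q := Hq)) ds' \<longrightarrow> V (d0 @ ds) = V (d0 @ ds')"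
  proof (intro ballI allI impI)
    fix d0 ds ds'
    assume a: "d0 \<in> D0" "fits_sizes (Suc q) nn (H(q := Hq)) ds" "fits_sizes (Suc q) nn (H(q := Hq)) ds'"
    have "V (d0 @ ds) = V' (d0 @ take q ds)" using last_coord[OF a(1,2)] .
    also have "\<dots> = V' (d0 @ take q ds')"
      using H(2) a(1) fits_sizes_Suc(2)[OF a(2)] fits_sizes_Suc(2)[OF a(3)] by blast
    also have "\<dots> = V (d0 @ ds')" using last_coord[OF a(1,3)] by simp
    finally show "V (d0 @ ds) = V (d0 @ ds')" .
  qed
  ultimately show ?case by blast
qed

end

section \<open>Sequences of blocks\<close>

lemma incr_seqs_mono: "A \<subseteq> B \<Longrightarrow> xs \<in> incr_seqs lt r A \<Longrightarrow> xs \<in> incr_seqs lt r B"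
  unfolding incr_seqs_def by auto

lemma Fblocks_mono: "A \<subseteq> B \<Longrightarrow> x \<in> Fblocks lt F r s A \<Longrightarrow> x \<in> Fblocks lt F r s B"
  unfolding Fblocks_def mem_Collect_eq by (metis incr_seqs_mono)

lemma Fblocks_levelsI:
  assumes len: "length xs = p" and r: "1 \<le> r"
    and rows: "\<And>i. i < p \<Longrightarrow> xs ! i \<in> incr_seqs lt r A \<and> (\<forall>a\<in>set (xs ! i). F a = L i)"
    and L: "\<And>i. Suc i < p \<Longrightarrow> L i < L (Suc i)"
  shows "xs \<in> Fblocks lt F r p A"
proof -
  have F: "F (xs ! i ! j) = L i" if "i < p" "j < r" for i j
  proof -
    have "length (xs ! i) = r" using rows[OF that(1)] unfolding incr_seqs_def by simp
    thus ?thesis using rows[OF that(1)] that(2) by simp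
  qed
  show ?thesis unfolding Fblocks_def mem_Collect_eq
  proof (intro conjI allI impI)
    show "length xs = p" by (rule len)
    show "xs ! i \<in> incr_seqs lt r A" if "i < p" for i using rows[OF that] by simp
    show "F (xs ! i ! j) = F (xs ! i ! l)" if "i < p" "j < r" "l < r" for i j l
      using F that by simp
    show "F (xs ! i ! 0) < F (xs ! Suc i ! 0)" if "Suc i < p" for i
      using F[of i 0] F[of "Suc i" 0] L[OF that] that r by simp
  qed
qed

lemma Fblocks_append:
  assumes xs: "xs \<in> Fblocks lt F r p A" and ys: "ys \<in> Fblocks lt F r q A"
    and join: "0 < p \<Longrightarrow> 0 < q \<Longrightarrow> F (xs ! (p - 1) ! 0) < F (ys ! 0 ! 0)"
  shows "xs @ ys \<in> Fblocks lt F r (p + q) A"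
proof -
  have lx: "length xs = p" and ly: "length ys = q" using xs ys unfolding Fblocks_def by simp_all
  have at: "(xs @ ys) ! i = (if i < p then xs ! i else ys ! (i - p))" for i
    using lx by (simp add: nth_append)
  have X: "\<And>i. i < p \<Longrightarrow> xs ! i \<in> incr_seqs lt r A"
      "\<And>i j l. i < p \<Longrightarrow> j < r \<Longrightarrow> l < r \<Longrightarrow> F (xs ! i ! j) = F (xs ! i ! l)"
      "\<And>i. Suc i < p \<Longrightarrow> F (xs ! i ! 0) < F (xs ! Suc i ! 0)"
    using xs unfolding Fblocks_def by blast+
  have Y: "\<And>i. i < q \<Longrightarrow> ys ! i \<in> incr_seqs lt r A"
      "\<And>i j l. i < q \<Longrightarrow> j < r \<Longrightarrow> l < r \<Longrightarrow> F (ys ! i ! j) = F (ys ! i ! l)"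
      "\<And>i. Suc i < q \<Longrightarrow> F (ys ! i ! 0) < F (ys ! Suc i ! 0)"
    using ys unfolding Fblocks_def by blast+
  show ?thesis unfolding Fblocks_def mem_Collect_eq
  proof (intro conjI allI impI)
    show "length (xs @ ys) = p + q" using lx ly by simp
    show "(xs @ ys) ! i \<in> incr_seqs lt r A" if "i < p + q" for i
      using X(1)[of i] Y(1)[of "i - p"] that unfolding at by (cases "i < p") simp_all
    show "F ((xs @ ys) ! i ! j) = F ((xs @ ys) ! i ! l)" if "i < p + q" "j < r" "l < r" for i j l
      using X(2)[of i j l] Y(2)[of "i - p" j l] that unfolding at by (cases "i < p") simp_all
    show "F ((xs @ ys) ! i ! 0) < F ((xs @ ys) ! Suc i ! 0)" if i: "Suc i < p + q" for i
    proof -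
      consider "Suc i < p" | "Suc i = p" | "p \<le> i" by linarith
      thus ?thesis
      proof cases
        case 1 thus ?thesis using X(3)[OF 1] unfolding at by simp
      next
        case 2
        hence "i = p - 1" "0 < q" using i by simp_all
        thus ?thesis using join 2 unfolding at by simp
      next
        case 3
        hence "Suc (i - p) < q" "Suc i - p = Suc (i - p)" using i by simp_all
        thus ?thesis using Y(3)[of "i - p"] 3 unfolding at by simp
      qed
    qed
  qed
qed

section \<open>The term \<open>\<tau>\<close> as a function of rows\<close>

lemma teval_cong: "(\<forall>i\<in>trm_vars t. w i = w' i) \<Longrightarrow> teval fI w t = teval fI w' t"
proof (induction t)
  case (Var n) then show ?case by simp
next
  case (Fn f ts)
  have "map (teval fI w) ts = map (teval fI w') ts"
    using Fn by (auto intro!: map_cong)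
  then show ?case by (metis teval.simps(2))
qed

definition sort_by :: "('m \<Rightarrow> 'm \<Rightarrow> bool) \<Rightarrow> 'm set \<Rightarrow> 'm list" where
  "sort_by lt A = (SOME l. set l = A \<and> sorted_wrt lt l)"

lemma sorted_wrt_unique:
  assumes lin: "strict_linorder lt"
  shows "sorted_wrt lt l1 \<Longrightarrow> sorted_wrt lt l2 \<Longrightarrow> set l1 = set l2 \<Longrightarrow> l1 = l2"
proof (induction l1 arbitrary: l2)
  case Nil then show ?case by simp
next
  case (Cons a l1)
  then obtain b l2' where l2: "l2 = b # l2'" by (cases l2) auto
  have irr: "\<And>x. \<not> lt x x" and tr: "\<And>x y z. lt x y \<Longrightarrow> lt y z \<Longrightarrow> lt x z"
    using lin unfolding strict_linorder_def by blast+
  have ab: "a = b"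
  proof (rule ccontr)
    assume "a \<noteq> b"
    hence "b \<in> set l1" "a \<in> set l2'" using Cons.prems(3) l2 by (auto simp: insert_eq_iff)
    hence "lt a b" "lt b a" using Cons.prems(1,2) l2 by auto
    thus False using tr irr by blast
  qed
  have "a \<notin> set l1" using Cons.prems(1) irr by auto
  moreover have "b \<notin> set l2'" using Cons.prems(2) l2 irr by auto
  ultimately have "set l1 = set l2'" using Cons.prems(3) l2 ab by auto
  hence "l1 = l2'" using Cons.IH Cons.prems(1,2) l2 by simp
  thus ?case using ab l2 by simp
qed

lemma sort_by_set: "strict_linorder lt \<Longrightarrow> sorted_wrt lt l \<Longrightarrow> sort_by lt (set l) = l"
proof -
  assume a: "strict_linorder lt" "sorted_wrt lt l"
  have "set (sort_by lt (set l)) = set l \<and> sorted_wrt lt (sort_by lt (set l))"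
    unfolding sort_by_def by (rule someI[of _ l]) (use a in simp)
  thus ?thesis using sorted_wrt_unique[OF a(1)] a(2) by blast
qed

lemma image_preimage_inj: "inj_on h D \<Longrightarrow> A \<subseteq> h ` D \<Longrightarrow> h ` {i \<in> D. h i \<in> A} = A"
  by blast

lemma finite_card_preimage_inj: "inj_on h D \<Longrightarrow> A \<subseteq> h ` D \<Longrightarrow> finite A \<Longrightarrow>
   finite {i \<in> D. h i \<in> A} \<and> card {i \<in> D. h i \<in> A} = card A"
proof -
  assume a: "inj_on h D" "A \<subseteq> h ` D" "finite A"
  have inj: "inj_on h {i \<in> D. h i \<in> A}" using a(1) by (rule inj_on_subset) blast
  have im: "h ` {i \<in> D. h i \<in> A} = A" using image_preimage_inj[OF a(1,2)] .
  have "finite {i \<in> D. h i \<in> A}" using finite_imageD[OF _ inj] im a(3) by simp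
  moreover have "card {i \<in> D. h i \<in> A} = card A" using card_image[OF inj] im by simp
  ultimately show ?thesis by simp
qed

lemma sort_by_image_preimage:
  assumes "strict_linorder lt" "inj_on h D" "set l \<subseteq> h ` D" "sorted_wrt lt l"
  shows "sort_by lt (h ` {i \<in> D. h i \<in> set l}) = l"
  using image_preimage_inj[OF assms(2,3)] sort_by_set[OF assms(1,4)] by simp

lemma sorted_wrt_irrefl_distinct: "(\<And>x. \<not> R x x) \<Longrightarrow> sorted_wrt R xs \<Longrightarrow> distinct xs"
  by (induction xs) auto

text \<open>An index pair \<open>(k, j)\<close> stands for the constant \<open>c\<^sub>k\<^sub>j\<close> (1-based, as in \<open>cval\<close>).  \<open>row_vals k x P\<close>
  lists the values of the constants of \<open>P\<close> in row \<open>k\<close>, and \<open>row_rank P i\<close> is the position of the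
  \<open>i\<close>-th constant among them.\<close>

definition row_vals :: "nat \<Rightarrow> 'm list list \<Rightarrow> (nat \<times> nat) list \<Rightarrow> 'm list" where
  "row_vals k x P = map (\<lambda>c. x ! (k - 1) ! (snd c - 1)) (filter (\<lambda>c. fst c = k) P)"

definition row_rank :: "(nat \<times> nat) list \<Rightarrow> nat \<Rightarrow> nat" where
  "row_rank P i = length (filter (\<lambda>c. fst c = fst (P ! i)) (take i P))"

lemma nth_filter_take_length:
  "i < length xs \<Longrightarrow> p (xs ! i) \<Longrightarrow>
    length (filter p (take i xs)) < length (filter p xs) \<and> filter p xs ! length (filter p (take i xs)) = xs ! i"
proof (induction xs arbitrary: i)
  case Nil then show ?case by simp
next
  case (Cons a xs)
  show ?case
  proof (cases i)
    case 0 then show ?thesis using Cons.prems by simp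
  next
    case (Suc j)
    then show ?thesis using Cons.IH[of j] Cons.prems by auto
  qed
qed

lemma row_vals_nth: "i < length P \<Longrightarrow> row_vals (fst (P ! i)) x P ! row_rank P i = cval x (P ! i)"
  unfolding row_vals_def row_rank_def cval_def
  using nth_filter_take_length[of i P "\<lambda>c. fst c = fst (P ! i)"] by simp

lemma row_rank_cong: "map fst P = map fst Q \<Longrightarrow> i < length P \<Longrightarrow> row_rank P i = row_rank Q i"
proof -
  assume a: "map fst P = map fst Q" "i < length P"
  have l: "length P = length Q" using a(1) by (metis length_map)
  have f: "fst (P ! i) = fst (Q ! i)" using a l by (metis nth_map)
  have "\<And>R. length (filter (\<lambda>c. fst c = fst (P ! i)) (take i R)) = length (filter (\<lambda>b. b = fst (P ! i)) (take i (map fst R)))"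
    by (simp add: take_map filter_map comp_def)
  thus ?thesis unfolding row_rank_def using a(1) f by metis
qed

text \<open>The constants \<open>cs\<close> and \<open>sig_cs' cs u ls\<close>
  have the same rows, so both sides of the equation in \<open>\<sigma>\<close> are \<open>eval_rows\<close> of the same \<open>\<tau>\<close> and
  \<open>cs\<close>, applied to different lists for the rows beyond \<open>u\<close>.\<close>

definition eval_rows :: "('f \<Rightarrow> 'm list \<Rightarrow> 'm) \<Rightarrow> 'f trm \<Rightarrow> (nat \<times> nat) list \<Rightarrow> (nat \<Rightarrow> 'm list) \<Rightarrow> 'm" where
  "eval_rows fI tau P Sub = teval fI (\<lambda>i. Sub (fst (P ! i)) ! row_rank P i) tau"

lemma teval_eq_eval_rows: "trm_vars tau \<subseteq> {..<length P} \<Longrightarrow>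
   teval fI (\<lambda>i. cval x (P ! i)) tau = eval_rows fI tau P (\<lambda>k. row_vals k x P)"
  unfolding eval_rows_def
proof (rule teval_cong, intro ballI)
  fix i assume "trm_vars tau \<subseteq> {..<length P}" "i \<in> trm_vars tau"
  hence "i < length P" by auto
  thus "cval x (P ! i) = row_vals (fst (P ! i)) x P ! row_rank P i" using row_vals_nth[of i P x] by simp
qed

lemma eval_rows_cong_fst: "trm_vars tau \<subseteq> {..<length P} \<Longrightarrow> map fst P = map fst Q \<Longrightarrow>
   eval_rows fI tau P Sub = eval_rows fI tau Q Sub"
  unfolding eval_rows_def
proof (rule teval_cong, intro ballI)
  fix i assume "trm_vars tau \<subseteq> {..<length P}" "map fst P = map fst Q" "i \<in> trm_vars tau"
  moreover hence "i < length P" "length P = length Q" by (auto dest: map_eq_imp_length_eq)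
  ultimately show "Sub (fst (P ! i)) ! row_rank P i = Sub (fst (Q ! i)) ! row_rank Q i"
    using row_rank_cong by (metis nth_map)
qed

lemma eval_rows_cong: "trm_vars tau \<subseteq> {..<length P} \<Longrightarrow> (\<forall>k\<in>fst ` set P. Sub k = Sub' k) \<Longrightarrow>
   eval_rows fI tau P Sub = eval_rows fI tau P Sub'"
  unfolding eval_rows_def by (rule teval_cong) auto

lemma sorted_row_vals:
  assumes "sorted_wrt lexless P" "\<forall>c\<in>set P. fst c = k \<longrightarrow> 1 \<le> snd c \<and> snd c \<le> length (x ! (k - 1))"
    "sorted_wrt lt (x ! (k - 1))"
  shows "sorted_wrt lt (row_vals k x P)"
  unfolding row_vals_def sorted_wrt_map
proof (rule sorted_wrt_mono_rel[OF _ sorted_wrt_filter[OF assms(1)]])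
  fix c d assume cd: "c \<in> set (filter (\<lambda>c. fst c = k) P)" "d \<in> set (filter (\<lambda>c. fst c = k) P)" "lexless c d"
  hence "snd c < snd d" "1 \<le> snd c" "snd d \<le> length (x ! (k - 1))"
    using assms(2) unfolding lexless_def by auto
  thus "lt (x ! (k - 1) ! (snd c - 1)) (x ! (k - 1) ! (snd d - 1))"
    using sorted_wrt_nth_less[OF assms(3)] by simp
qed

lemma set_row_vals: "\<forall>c\<in>set P. fst c = k \<longrightarrow> 1 \<le> snd c \<and> snd c \<le> length (x ! (k - 1)) \<Longrightarrow>
  set (row_vals k x P) \<subseteq> set (x ! (k - 1))"
  unfolding row_vals_def by auto

lemma length_row_vals: "length (row_vals k x P) = length (filter (\<lambda>c. fst c = k) P)"
  unfolding row_vals_def by simp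

lemma length_filter_fst_eq: "map fst P = map fst Q \<Longrightarrow>
   length (filter (\<lambda>c. fst c = k) P) = length (filter (\<lambda>c. fst c = k) Q)"
proof -
  assume "map fst P = map fst Q"
  hence "length (filter (\<lambda>b. b = k) (map fst P)) = length (filter (\<lambda>b. b = k) (map fst Q))" by simp
  thus ?thesis by (simp add: filter_map comp_def)
qed

lemma dropWhile_fst_gt:
  "sorted_wrt lexless xs \<Longrightarrow> c \<in> set (dropWhile (\<lambda>c. fst c \<le> u) xs) \<Longrightarrow> u < fst c"
proof (induction xs)
  case Nil then show ?case by simp
next
  case (Cons a xs)
  show ?case
  proof (cases "fst a \<le> u")
    case True then show ?thesis using Cons by simp
  next
    case False
    hence "c = a \<or> c \<in> set xs" using Cons.prems(2) by simp
    thus ?thesis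
    proof
      assume "c \<in> set xs"
      hence "lexless a c" using Cons.prems(1) by simp
      thus ?thesis using False unfolding lexless_def by auto
    qed (use False in simp)
  qed
qed

section \<open>The game\<close>

definition hist_map :: "('o list \<Rightarrow> 'o \<Rightarrow> 'o) \<Rightarrow> 'o list \<Rightarrow> 'o list" where
  "hist_map ns hist = foldl (\<lambda>acc m. acc @ [ns acc m]) [] hist"

lemma hist_map_snoc: "hist_map ns (xs @ [m]) = hist_map ns xs @ [ns (hist_map ns xs) m]"
  unfolding hist_map_def by simp

lemma length_hist_map: "length (hist_map ns xs) = length xs"
  by (induction xs rule: rev_induct) (auto simp: hist_map_snoc, simp add: hist_map_def)

lemma take_hist_map: "take k (hist_map ns xs) = hist_map ns (take k xs)"
proof (induction xs rule: rev_induct)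
  case Nil then show ?case by (simp add: hist_map_def)
next
  case (snoc m xs)
  show ?case
  proof (cases "k \<le> length xs")
    case True
    then show ?thesis using snoc length_hist_map[of ns xs] by (simp add: hist_map_snoc)
  next
    case False
    then show ?thesis using length_hist_map[of ns "xs @ [m]"] by simp
  qed
qed

lemma nth_hist_map: "k < length xs \<Longrightarrow> hist_map ns xs ! k = ns (hist_map ns (take k xs)) (xs ! k)"
proof -
  assume k: "k < length xs"
  have "hist_map ns xs ! k = take (Suc k) (hist_map ns xs) ! k" by simp
  also have "\<dots> = hist_map ns (take (Suc k) xs) ! k" by (simp only: take_hist_map)
  also have "take (Suc k) xs = take k xs @ [xs ! k]" using k by (simp add: take_Suc_conv_app_nth)
  also have "hist_map ns (take k xs @ [xs ! k]) ! k = ns (hist_map ns (take k xs)) (xs ! k)"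
    using length_hist_map[of ns "take k xs"] k by (simp add: hist_map_snoc nth_append)
  finally show ?thesis .
qed

definition II_wins_with :: "('m \<Rightarrow> 'm \<Rightarrow> bool) \<Rightarrow> ('m \<Rightarrow> 'o::wellorder) \<Rightarrow> nat \<Rightarrow> nat \<Rightarrow> nat
    \<Rightarrow> 'm list list set \<Rightarrow> 'o list \<Rightarrow> (nat \<Rightarrow> 'o) \<Rightarrow> ('o \<Rightarrow> 'o) \<Rightarrow> (nat \<Rightarrow> 'm set) \<Rightarrow> ('o \<Rightarrow> 'm set) \<Rightarrow> bool" where
  "II_wins_with lt F r s e S mus bet tail X Y \<longleftrightarrow>
        (\<forall>k\<in>{1..e}. X k \<subseteq> {a. F a = bet k} \<and>
             (card_of (X k), card_of {j. j < mus ! (k - 1)}) \<in> ordIso) \<and>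
        (\<forall>i. i \<noteq> ozero \<longrightarrow> Y i \<subseteq> {a. F a = tail i}) \<and>
        (\<forall>m::'o. \<exists>i. i \<noteq> ozero \<and> (card_of {j. j < m}, card_of (Y i)) \<in> ordLeq) \<and>
        (\<forall>x. length x = s \<and> (\<forall>k\<in>{1..e}. x ! (k - 1) \<in> incr_seqs lt r (X k)) \<and>
             drop e x \<in> Fblocks lt F r (s - e) (\<Union>i\<in>{i. i \<noteq> ozero}. Y i)
             \<longrightarrow> x \<in> S)"

lemma II_wins_iff: "II_wins lt F r s e S mus bet tail \<longleftrightarrow>
     (\<forall>k. 1 \<le> k \<and> k < e \<longrightarrow> bet k < bet (Suc k)) \<and>
     bet e = tail ozero \<and> strict_mono tail \<and> (\<exists>X Y. II_wins_with lt F r s e S mus bet tail X Y)"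
  unfolding II_wins_def II_wins_with_def by (rule refl)

lemma ozero_least: "ozero \<le> (i::'o::wellorder)"
  unfolding ozero_def by (rule Least_le) simp

locale superlarge_game = inaccessible T for T :: "'o::wellorder itself" +
  fixes lt :: "'m \<Rightarrow> 'm \<Rightarrow> bool" and Mc :: "'o \<Rightarrow> 'm set" and F :: "'m \<Rightarrow> 'o"
    and r s e :: nat and S :: "'m list list set"
    and fI :: "'f \<Rightarrow> 'm list \<Rightarrow> 'm" and ar :: "'f \<Rightarrow> nat" and tau :: "'f trm"
    and cs :: "(nat \<times> nat) list" and u v :: nat and ls :: "nat list"
  assumes lin: "strict_linorder lt"
    and Fdef: "F = Fidx Mc"
    and Mc_small: "\<And>i. small (Mc i)"
    and Mc_mono: "\<And>i j. i \<le> j \<Longrightarrow> Mc i \<subseteq> Mc j"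
    and Mc_init: "\<And>i. init_seg lt (Mc i) UNIV"
    and Mc_union: "(\<Union>i. Mc i) = UNIV"
    and rs: "1 \<le> r" "1 \<le> s"
    and e: "1 \<le> e" "e \<le> s"
    and Ssub: "S \<subseteq> Fblocks lt F r s UNIV"
    and Ssl: "superlarge lt F r s e S"
    and sig: "sigma_iv ar tau cs u v ls"
    and bnd: "consts_bounded r s cs u v ls"
    and iot: "e \<le> iota cs"
begin

lemma F_mem: "a \<in> Mc (F a)"
proof -
  have "\<exists>i. a \<in> Mc i" using Mc_union by blast
  thus ?thesis unfolding Fdef Fidx_def by (rule LeastI_ex)
qed

lemma level_mem: "F a = b \<Longrightarrow> a \<in> Mc b"
  using F_mem by blast

lemma level_sub: "A \<subseteq> {a. F a = b} \<Longrightarrow> A \<subseteq> Mc b"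
  using level_mem by blast

lemma below_mem: "lt b a \<Longrightarrow> a \<in> Mc i \<Longrightarrow> b \<in> Mc i"
  using Mc_init[of i] unfolding init_seg_def by blast

abbreviation E where "E \<equiv> iota cs"

definition str :: "'o list \<Rightarrow> 'o \<Rightarrow> 'o" where
  "str = (SOME st. \<forall>mus. length mus = e \<longrightarrow> II_wins lt F r s e S mus (\<lambda>k. st (take k mus) ozero) (st mus))"

lemma str_wins: "length mus = e \<Longrightarrow> II_wins lt F r s e S mus (\<lambda>k. str (take k mus) ozero) (str mus)"
proof -
  have "\<exists>st. \<forall>mus. length mus = e \<longrightarrow> II_wins lt F r s e S mus (\<lambda>k. st (take k mus) ozero) (st mus)"
    using Ssl unfolding superlarge_def by blast
  hence "\<forall>mus. length mus = e \<longrightarrow> II_wins lt F r s e S mus (\<lambda>k. str (take k mus) ozero) (str mus)"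
    unfolding str_def by (rule someI_ex)
  moreover assume "length mus = e"
  ultimately show ?thesis by blast
qed

definition win_sets :: "'o list \<Rightarrow> (nat \<Rightarrow> 'm set) \<times> ('o \<Rightarrow> 'm set)" where
  "win_sets z = (SOME p. II_wins_with lt F r s e S z (\<lambda>k. str (take k z) ozero) (str z) (fst p) (snd p))"

definition win_X where "win_X z = fst (win_sets z)"
definition win_Y where "win_Y z = snd (win_sets z)"

lemma str_wins_parts:
  assumes "length z = e"
  shows "\<forall>k. 1 \<le> k \<and> k < e \<longrightarrow> str (take k z) ozero < str (take (Suc k) z) ozero"
    "str (take e z) ozero = str z ozero" "strict_mono (str z)"
    "II_wins_with lt F r s e S z (\<lambda>k. str (take k z) ozero) (str z) (win_X z) (win_Y z)"
proof -
  have w: "II_wins lt F r s e S z (\<lambda>k. str (take k z) ozero) (str z)" using str_wins[OF assms] .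
  thus "\<forall>k. 1 \<le> k \<and> k < e \<longrightarrow> str (take k z) ozero < str (take (Suc k) z) ozero"
    "str (take e z) ozero = str z ozero" "strict_mono (str z)"
    unfolding II_wins_iff by auto
  have "\<exists>X Y. II_wins_with lt F r s e S z (\<lambda>k. str (take k z) ozero) (str z) X Y" using w unfolding II_wins_iff by blast
  hence "\<exists>p. II_wins_with lt F r s e S z (\<lambda>k. str (take k z) ozero) (str z) (fst p) (snd p)" by auto
  hence "II_wins_with lt F r s e S z (\<lambda>k. str (take k z) ozero) (str z) (fst (win_sets z)) (snd (win_sets z))"
    unfolding win_sets_def by (rule someI_ex)
  thus "II_wins_with lt F r s e S z (\<lambda>k. str (take k z) ozero) (str z) (win_X z) (win_Y z)"
    unfolding win_X_def win_Y_def .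
qed

lemma win_Y_level: "length z = e \<Longrightarrow> i \<noteq> ozero \<Longrightarrow> win_Y z i \<subseteq> {a. F a = str z i}"
  using str_wins_parts(4) unfolding II_wins_with_def by blast

lemma win_Y_large: "length z = e \<Longrightarrow> \<exists>i. i \<noteq> ozero \<and> |{j. j < (m::'o)}| \<le>o |win_Y z i|"
  using str_wins_parts(4) unfolding II_wins_with_def by blast

lemma win_X_level: "length z = e \<Longrightarrow> k \<in> {1..e} \<Longrightarrow> win_X z k \<subseteq> {a. F a = str (take k z) ozero}"
  using str_wins_parts(4) unfolding II_wins_with_def by blast

lemma win_X_card: "length z = e \<Longrightarrow> k \<in> {1..e} \<Longrightarrow> |win_X z k| =o |{j. j < z ! (k - 1)}|"
  using str_wins_parts(4) unfolding II_wins_with_def by blast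

lemma win_product_in_S: "length z = e \<Longrightarrow> length x = s \<Longrightarrow> (\<forall>k\<in>{1..e}. x ! (k - 1) \<in> incr_seqs lt r (win_X z k)) \<Longrightarrow>
   drop e x \<in> Fblocks lt F r (s - e) (\<Union>i\<in>{i. i \<noteq> ozero}. win_Y z i) \<Longrightarrow> x \<in> S"
  using str_wins_parts(4) unfolding II_wins_with_def by blast

lemma win_Y_large_beyond:
  fixes m :: 'o
  assumes z: "length z = e"
  shows "\<exists>i. i \<noteq> ozero \<and> i0 < i \<and> |{j. j < m}| \<le>o |win_Y z i|"
proof -
  have smM: "small (Mc (str z i0))" by (rule Mc_small)
  obtain m' :: 'o where m': "|Mc (str z i0)| <o |{j. j < m'}|" using small_ordLess_initial_segment[OF smM] by blast
  define m2 where "m2 = max m m'"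
  obtain i where i: "i \<noteq> ozero" "|{j. j < m2}| \<le>o |win_Y z i|" using win_Y_large[OF z] by blast
  have mm: "|{j. j < m}| \<le>o |{j. j < m2}|" "|{j. j < m'}| \<le>o |{j. j < m2}|"
    unfolding m2_def by (auto intro!: card_of_mono1 simp: less_max_iff_disj)
  have "i0 < i"
  proof (rule ccontr)
    assume "\<not> i0 < i"
    hence ii: "i \<le> i0" by simp
    have "win_Y z i \<subseteq> Mc (str z i)" using win_Y_level[OF z i(1)] by (rule level_sub)
    also have "\<dots> \<subseteq> Mc (str z i0)" using Mc_mono str_wins_parts(3)[OF z] ii by (metis strict_mono_less_eq)
    finally have "|win_Y z i| \<le>o |Mc (str z i0)|" by (rule card_of_mono1)
    hence "|{j. j < m'}| \<le>o |Mc (str z i0)|" using mm(2) i(2) ordLeq_transitive by metis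
    hence "|{j. j < m'}| <o |{j. j < m'}|" using m' ordLeq_ordLess_trans by blast
    thus False using ordLess_irreflexive by blast
  qed
  thus ?thesis using i mm(1) ordLeq_transitive by blast
qed

text \<open>Player I's cardinals are replaced by \<open>inflate\<close>:
  unchanged up to row \<open>u\<close>, and beyond it enlarged to arrow bounds for colourings with values in the
  small model \<open>M\<^bsub>\<beta>\<^sub>u\<^esub>\<close>.  The first \<open>e\<close> of them are answered by the winning strategy \<open>str\<close>;
  the later levels are taken from the tail of \<open>str\<close>, at positions \<open>tail_idx\<close> where its sets are
  large enough, and the new tail is the part of the old one beyond these positions.\<close>

primrec tail_idx :: "'o list \<Rightarrow> nat \<Rightarrow> 'o" where
  "tail_idx z 0 = ozero"
| "tail_idx z (Suc j) = (SOME i. i \<noteq> ozero \<and> tail_idx z j < i \<and> |{x. x < z ! (e + j)}| \<le>o |win_Y (take e z) i| )"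

lemma tail_idx_take: "e + j \<le> k \<Longrightarrow> tail_idx (take k z) j = tail_idx z j"
proof (induction j)
  case 0 then show ?case by simp
next
  case (Suc j)
  have "(take k z) ! (e + j) = z ! (e + j)" using Suc.prems by simp
  moreover have "take e (take k z) = take e z" using Suc.prems by (simp add: min_def)
  moreover have "tail_idx (take k z) j = tail_idx z j" using Suc by simp
  ultimately show ?case by simp
qed

lemma tail_idx_Suc:
  assumes "e \<le> length z"
  shows "tail_idx z (Suc j) \<noteq> ozero \<and> tail_idx z j < tail_idx z (Suc j) \<and> |{x. x < z ! (e + j)}| \<le>o |win_Y (take e z) (tail_idx z (Suc j))|"
proof -
  have "length (take e z) = e" using assms by simp
  hence "\<exists>i. i \<noteq> ozero \<and> tail_idx z j < i \<and> |{x. x < z ! (e + j)}| \<le>o |win_Y (take e z) i|" by (rule win_Y_large_beyond)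
  thus ?thesis unfolding tail_idx.simps by (rule someI_ex)
qed

lemma tail_idx_mono: "e \<le> length z \<Longrightarrow> j < j' \<Longrightarrow> tail_idx z j < tail_idx z j'"
proof (induction j')
  case 0 then show ?case by simp
next
  case (Suc j')
  show ?case
  proof (cases "j = j'")
    case True then show ?thesis using tail_idx_Suc[OF Suc.prems(1)] by simp
  next
    case False
    hence "tail_idx z j < tail_idx z j'" using Suc by simp
    moreover have "tail_idx z j' < tail_idx z (Suc j')" using tail_idx_Suc[OF Suc.prems(1), of j'] by blast
    ultimately show ?thesis by (rule less_trans)
  qed
qed

definition level_of :: "'o list \<Rightarrow> 'o" where
  "level_of z = (if length z < e then str z ozero else str (take e z) (tail_idx z (length z - e)))"

definition colours_of :: "'o list \<Rightarrow> 'm option set" where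
  "colours_of z = insert None (Some ` Mc (level_of (take u z)))"

definition max_size :: "'o list \<Rightarrow> 'o" where
  "max_size z = Max (insert ozero (set z))"

definition row_count :: "nat \<Rightarrow> nat" where
  "row_count k = length (filter (\<lambda>c. fst c = k) cs)"

definition new_size :: "'o list \<Rightarrow> 'o \<Rightarrow> 'o" where
  "new_size z m = (if Suc (length z) \<le> u then m
     else arrow_bound (row_count (Suc (length z))) (prefix_colourings E (max_size z) (colours_of z)) m)"

definition inflate :: "'o list \<Rightarrow> 'o list" where
  "inflate = hist_map new_size"

definition tail_shift :: "'o list \<Rightarrow> 'o \<Rightarrow> 'o" where
  "tail_shift z = enum {j. tail_idx z (length z - e) \<le> j}"

definition str' :: "'o list \<Rightarrow> 'o \<Rightarrow> 'o" where
  "str' hist x = (if length hist < E then level_of (inflate hist) else str (take e (inflate hist)) (tail_shift (inflate hist) x))"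

lemma max_size_ge: "x \<in> set z \<Longrightarrow> x \<le> max_size z"
  unfolding max_size_def by (rule Max_ge) auto

lemma max_size_mono: "set z \<subseteq> set z' \<Longrightarrow> max_size z \<le> max_size z'"
  unfolding max_size_def by (rule Max_mono) auto

lemma enum_dom_tail_shift: "enum_dom {j. tail_idx z (length z - e) \<le> j} \<beta>"
  by (rule enum_dom_if_not_small[OF not_small_atLeast])

lemma strict_mono_tail_shift: "strict_mono (tail_shift z)"
  unfolding tail_shift_def by (rule strict_monoI) (use enum_mono enum_dom_tail_shift in blast)

lemma tail_shift_zero: "tail_shift z ozero = tail_idx z (length z - e)"
proof -
  have "tail_shift z ozero = (LEAST y. y \<in> {j. tail_idx z (length z - e) \<le> j} \<and> (\<forall>\<gamma> < ozero. tail_shift z \<gamma> < y))"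
    unfolding tail_shift_def by (rule enum_eq)
  also have "\<dots> = tail_idx z (length z - e)"
    by (rule Least_equality) (auto simp: leD[OF ozero_least])
  finally show ?thesis .
qed

lemma tail_shift_onto: "tail_idx z (length z - e) \<le> j \<Longrightarrow> \<exists>i. tail_shift z i = j"
  using enum_onto[of j "{j. tail_idx z (length z - e) \<le> j}"] unfolding tail_shift_def by auto

lemma tail_shift_nonzero: "i \<noteq> ozero \<Longrightarrow> tail_idx z (length z - e) < tail_shift z i"
proof -
  assume "i \<noteq> ozero"
  hence "ozero < i" using ozero_least[of i] by simp
  hence "tail_shift z ozero < tail_shift z i" using strict_mono_tail_shift strict_monoD by blast
  thus ?thesis using tail_shift_zero by simp
qed

lemma length_inflate: "length (inflate h) = length h"
  unfolding inflate_def by (rule length_hist_map)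

lemma take_inflate: "take k (inflate h) = inflate (take k h)"
  unfolding inflate_def by (rule take_hist_map)

lemma nth_inflate: "k < length h \<Longrightarrow> inflate h ! k = new_size (take k (inflate h)) (h ! k)"
  unfolding inflate_def using nth_hist_map take_hist_map by metis

abbreviation cs' where "cs' \<equiv> sig_cs' cs u ls"
abbreviation m0 where "m0 \<equiv> sig_m cs u"

lemma sigma_iv_facts: "wf_trm ar tau" "trm_vars tau \<subseteq> {..<length cs}" "cs \<noteq> []" "sorted_wrt lexless cs"
    "u < E" "length ls = length cs - m0" "sorted_wrt lexless cs'"
  using sig unfolding sigma_iv_def iota_def by auto

lemma consts_bounded_facts: "\<And>i j. (i, j) \<in> set cs \<Longrightarrow> 1 \<le> i \<and> i \<le> s \<and> 1 \<le> j \<and> j \<le> r"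
    "\<And>i j. (i, j) \<in> set cs' \<Longrightarrow> 1 \<le> i \<and> i \<le> s \<and> 1 \<le> j \<and> j \<le> r"
    "1 \<le> u" "u \<le> s" "1 \<le> v" "v \<le> r"
  using bnd unfolding consts_bounded_def by auto

lemma iota_in_cs: "(E, snd (last cs)) \<in> set cs"
  using sigma_iv_facts(3) unfolding iota_def by simp

lemma iota_le_s: "E \<le> s" using consts_bounded_facts(1)[OF iota_in_cs] by simp
lemma u_pos: "1 \<le> u" by (rule consts_bounded_facts(3))
lemma u_less_iota: "u < E" by (rule sigma_iv_facts(5))

lemma fst_le_iota: "c \<in> set cs \<Longrightarrow> fst c \<le> E"
proof -
  assume "c \<in> set cs"
  then obtain i where i: "i < length cs" "cs ! i = c" by (auto simp: in_set_conv_nth)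
  show "fst c \<le> E"
  proof (cases "i = length cs - 1")
    case True then show ?thesis using i sigma_iv_facts(3) unfolding iota_def by (simp add: last_conv_nth)
  next
    case False
    hence "i < length cs - 1" using i by simp
    hence "lexless (cs ! i) (cs ! (length cs - 1))"
      using sorted_wrt_nth_less[OF sigma_iv_facts(4)] sigma_iv_facts(3) by simp
    thus ?thesis using i sigma_iv_facts(3) unfolding lexless_def iota_def by (auto simp: last_conv_nth)
  qed
qed

lemma drop_sig_m: "drop m0 cs = dropWhile (\<lambda>c. fst c \<le> u) cs"
  unfolding sig_m_def by (rule dropWhile_eq_drop[symmetric])

lemma fst_drop_sig_m_gt: "c \<in> set (drop m0 cs) \<Longrightarrow> u < fst c"
  using drop_sig_m dropWhile_fst_gt[OF sigma_iv_facts(4)] by simp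

lemma cs'_eq: "cs' = take m0 cs @ zip (map fst (drop m0 cs)) ls"
  unfolding sig_cs'_def by simp

lemma map_fst_cs': "map fst cs' = map fst cs"
proof -
  have "length (map fst (drop m0 cs)) = length ls" using sigma_iv_facts(6) by simp
  hence "map fst (zip (map fst (drop m0 cs)) ls) = map fst (drop m0 cs)" by simp
  hence "map fst cs' = map fst (take m0 cs) @ map fst (drop m0 cs)" using cs'_eq by simp
  thus ?thesis by (simp add: map_append[symmetric])
qed

lemma len_cs': "length cs' = length cs"
  using map_fst_cs' by (metis length_map)

lemma filter_cs'_early: "k \<le> u \<Longrightarrow> filter (\<lambda>c. fst c = k) cs' = filter (\<lambda>c. fst c = k) cs"
proof -
  assume k: "k \<le> u"
  have "filter (\<lambda>c. fst c = k) (drop m0 cs) = []" unfolding filter_empty_conv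
  proof
    fix c assume "c \<in> set (drop m0 cs)"
    hence "u < fst c" by (rule fst_drop_sig_m_gt)
    thus "\<not> fst c = k" using k by simp
  qed
  moreover have "filter (\<lambda>c. fst c = k) (zip (map fst (drop m0 cs)) ls) = []"
  proof -
    have "\<forall>c\<in>set (zip (map fst (drop m0 cs)) ls). u < fst c"
      using fst_drop_sig_m_gt by (auto dest!: set_zip_leftD)
    thus ?thesis using k by (auto simp: filter_empty_conv)
  qed
  moreover have "cs = take m0 cs @ drop m0 cs" by simp
  ultimately show ?thesis using cs'_eq by (metis filter_append append_Nil2)
qed

lemma length_filter_cs': "length (filter (\<lambda>c. fst c = k) cs') = row_count k"
  unfolding row_count_def using length_filter_fst_eq[OF map_fst_cs'] .

lemma e_le_iota: "e \<le> E" using iot by simp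

lemma small_colours: "small (insert None (Some ` Mc b))"
  by (intro small_insert small_image Mc_small)

context
  fixes mus :: "'o list"
  assumes len: "length mus = E"
begin

text \<open>For a play \<open>mus\<close> of player I: \<open>zs\<close> are the inflated cardinals, \<open>z0\<close> the moves passed on to
  \<open>str\<close>, \<open>lev k\<close> the \<open>k\<close>-th level played, and \<open>Zbig k\<close> the set provided there by \<open>str\<close>.\<close>

definition zs where "zs = inflate mus"
definition z0 where "z0 = take e zs"
definition lev where "lev k = level_of (take k zs)"
definition colours where "colours = insert None (Some ` Mc (lev u))"
definition Zbig where "Zbig k = (if k \<le> e then win_X z0 k else win_Y z0 (tail_idx zs (k - e)))"

lemma length_zs: "length zs = E" unfolding zs_def using length_inflate len by simp
lemma length_z0: "length z0 = e" unfolding z0_def using length_zs e_le_iota by simp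

lemma zs_early: "1 \<le> k \<Longrightarrow> k \<le> u \<Longrightarrow> zs ! (k - 1) = mus ! (k - 1)"
proof -
  assume k: "1 \<le> k" "k \<le> u"
  hence "k - 1 < length mus" using len u_less_iota by simp
  hence "zs ! (k - 1) = new_size (take (k - 1) zs) (mus ! (k - 1))" unfolding zs_def by (rule nth_inflate)
  moreover have "length (take (k - 1) zs) = k - 1" using length_zs k u_less_iota by simp
  ultimately show ?thesis unfolding new_size_def using k by simp
qed

lemma zs_late: "u < k \<Longrightarrow> k \<le> E \<Longrightarrow>
   zs ! (k - 1) = arrow_bound (row_count k) (prefix_colourings E (max_size (take (k - 1) zs)) colours) (mus ! (k - 1))"
proof -
  assume k: "u < k" "k \<le> E"
  hence "k - 1 < length mus" using len by simp
  hence "zs ! (k - 1) = new_size (take (k - 1) zs) (mus ! (k - 1))" unfolding zs_def by (rule nth_inflate)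
  moreover have l: "length (take (k - 1) zs) = k - 1" using length_zs k by simp
  moreover have "take u (take (k - 1) zs) = take u zs" using k by (simp add: min_absorb1)
  hence "colours_of (take (k - 1) zs) = colours"
    unfolding colours_of_def colours_def lev_def by simp
  moreover have "Suc (k - 1) = k" using k by simp
  ultimately show ?thesis unfolding new_size_def using k by simp
qed

lemma str'_level: "1 \<le> k \<Longrightarrow> k \<le> E \<Longrightarrow> str' (take k mus) ozero = lev k"
proof -
  assume k: "1 \<le> k" "k \<le> E"
  show ?thesis
  proof (cases "k < E")
    case True
    then show ?thesis unfolding str'_def lev_def zs_def using len by (simp add: take_inflate)
  next
    case False
    hence kE: "k = E" using k by simp
    have "str' (take k mus) ozero = str (take e zs) (tail_shift zs ozero)"
      unfolding str'_def zs_def using kE len by simp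
    also have "\<dots> = str (take e zs) (tail_idx zs (length zs - e))" by (simp add: tail_shift_zero)
    also have "\<dots> = lev k" unfolding lev_def level_of_def using kE length_zs e_le_iota by simp
    finally show ?thesis .
  qed
qed

lemma str'_tail: "str' mus = (\<lambda>x. str z0 (tail_shift zs x))"
  unfolding str'_def z0_def zs_def using len by (simp add: fun_eq_iff)

lemma lev_less_e: "k < e \<Longrightarrow> lev k = str (take k z0) ozero"
  unfolding lev_def level_of_def z0_def using length_zs e_le_iota by (simp add: min_def)

lemma lev_ge_e: "e \<le> k \<Longrightarrow> k \<le> E \<Longrightarrow> lev k = str z0 (tail_idx zs (k - e))"
proof -
  assume k: "e \<le> k" "k \<le> E"
  have "lev k = str (take e (take k zs)) (tail_idx (take k zs) (k - e))"
    unfolding lev_def level_of_def using k length_zs by (simp add: min_def)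
  also have "take e (take k zs) = z0" unfolding z0_def using k by (simp add: min_def)
  also have "tail_idx (take k zs) (k - e) = tail_idx zs (k - e)" using k by (intro tail_idx_take) simp
  finally show ?thesis .
qed

lemma lev_e: "lev e = str z0 ozero"
  using lev_ge_e[of e] e_le_iota by simp

lemma lev_mono: "1 \<le> k \<Longrightarrow> k < E \<Longrightarrow> lev k < lev (Suc k)"
proof -
  assume k: "1 \<le> k" "k < E"
  have w1: "\<forall>k. 1 \<le> k \<and> k < e \<longrightarrow> str (take k z0) ozero < str (take (Suc k) z0) ozero"
    using str_wins_parts(1)[OF length_z0] .
  have w2: "str (take e z0) ozero = str z0 ozero" using str_wins_parts(2)[OF length_z0] .
  have w3: "strict_mono (str z0)" using str_wins_parts(3)[OF length_z0] .
  show ?thesis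
  proof (cases "Suc k < e")
    case True
    then show ?thesis using w1 k lev_less_e by simp
  next
    case False
    show ?thesis
    proof (cases "Suc k = e")
      case True
      hence "lev k = str (take k z0) ozero" using lev_less_e by simp
      also have "\<dots> < str (take e z0) ozero" using w1 k True by auto
      also have "\<dots> = lev (Suc k)" using w2 lev_e True by simp
      finally show ?thesis .
    next
      case False
      hence ke: "e \<le> k" using \<open>\<not> Suc k < e\<close> by simp
      have "e \<le> length zs" using length_zs e_le_iota by simp
      hence "tail_idx zs (k - e) < tail_idx zs (Suc k - e)" using ke by (intro tail_idx_mono) auto
      hence "str z0 (tail_idx zs (k - e)) < str z0 (tail_idx zs (Suc k - e))" using w3 strict_monoD by blast
      thus ?thesis using lev_ge_e ke k by simp
    qed
  qed
qed

lemma tail_idx_nonzero: "e < k \<Longrightarrow> tail_idx zs (k - e) \<noteq> ozero"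
proof -
  assume k: "e < k"
  then obtain j where j: "k - e = Suc j" by (metis Suc_diff_Suc)
  have "e \<le> length zs" using length_zs e_le_iota by simp
  thus ?thesis using tail_idx_Suc[of zs j] j by simp
qed

lemma Zbig_level: "1 \<le> k \<Longrightarrow> k \<le> E \<Longrightarrow> Zbig k \<subseteq> {a. F a = lev k}"
proof -
  assume k: "1 \<le> k" "k \<le> E"
  show ?thesis
  proof (cases "k \<le> e")
    case True
    hence "Zbig k \<subseteq> {a. F a = str (take k z0) ozero}" unfolding Zbig_def
      using win_X_level[OF length_z0] k by simp
    moreover have "str (take k z0) ozero = lev k"
    proof (cases "k < e")
      case True then show ?thesis using lev_less_e by simp
    next
      case False
      hence "k = e" using \<open>k \<le> e\<close> by simp
      thus ?thesis using str_wins_parts(2)[OF length_z0] lev_e by simp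
    qed
    ultimately show ?thesis by simp
  next
    case False
    hence "Zbig k = win_Y z0 (tail_idx zs (k - e))" unfolding Zbig_def by simp
    also have "\<dots> \<subseteq> {a. F a = str z0 (tail_idx zs (k - e))}" using win_Y_level[OF length_z0 tail_idx_nonzero] False by simp
    finally show ?thesis using lev_ge_e False k by simp
  qed
qed

lemma Zbig_large: "1 \<le> k \<Longrightarrow> k \<le> E \<Longrightarrow> |{j. j < zs ! (k - 1)}| \<le>o |Zbig k|"
proof -
  assume k: "1 \<le> k" "k \<le> E"
  show ?thesis
  proof (cases "k \<le> e")
    case True
    have "|win_X z0 k| =o |{j. j < z0 ! (k - 1)}|" using win_X_card[OF length_z0] k True by simp
    moreover have "z0 ! (k - 1) = zs ! (k - 1)" unfolding z0_def using k True by simp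
    ultimately have "|{j. j < zs ! (k - 1)}| =o |win_X z0 k|" using ordIso_symmetric by simp
    thus ?thesis unfolding Zbig_def using True ordIso_imp_ordLeq by simp
  next
    case False
    then obtain j where j: "k - e = Suc j" by (metis Suc_diff_Suc not_le)
    have "e \<le> length zs" using length_zs e_le_iota by simp
    hence "|{x. x < zs ! (e + j)}| \<le>o |win_Y (take e zs) (tail_idx zs (Suc j))|" using tail_idx_Suc by blast
    moreover have "e + j = k - 1" using j by simp
    ultimately show ?thesis unfolding Zbig_def z0_def using False j by simp
  qed
qed

definition zenum :: "nat \<Rightarrow> 'o \<Rightarrow> 'm" where
  "zenum k = (SOME h. inj_on h {j. j < zs ! (k - 1)} \<and> h ` {j. j < zs ! (k - 1)} \<subseteq> Zbig k)"

lemma zenum_inj: "1 \<le> k \<Longrightarrow> k \<le> E \<Longrightarrow>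
   inj_on (zenum k) {j. j < zs ! (k - 1)} \<and> zenum k ` {j. j < zs ! (k - 1)} \<subseteq> Zbig k"
proof -
  assume k: "1 \<le> k" "k \<le> E"
  have "\<exists>h. inj_on h {j. j < zs ! (k - 1)} \<and> h ` {j. j < zs ! (k - 1)} \<subseteq> Zbig k"
    using Zbig_large[OF k] card_of_ordLeq by blast
  thus ?thesis unfolding zenum_def by (rule someI_ex)
qed

text \<open>A list \<open>ds\<close> codes rows through the
  enumerations \<open>zenum\<close>: the first \<open>u\<close> entries code whole rows, the later ones the constants of a row
  beyond \<open>u\<close>.  The colour is the value of \<open>\<tau>\<close> when it lies below \<open>c\<^sub>u\<^sub>v\<close>: then it lies in the
  initial segment \<open>M\<^bsub>\<beta>\<^sub>u\<^esub>\<close>, so there are fewer than \<open>\<theta>\<close> colours.\<close>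

definition tau_colour :: "'o set list \<Rightarrow> 'm option" where
  "tau_colour ds = (let xs = map (\<lambda>k. sort_by lt (zenum (Suc k) ` (ds ! k))) [0..<u];
     Sub = (\<lambda>k. if k \<le> u then row_vals k xs cs else sort_by lt (zenum k ` (ds ! (k - 1))));
     val = eval_rows fI tau cs Sub; a = xs ! (u - 1) ! (v - 1)
   in if lt val a \<and> val \<in> Mc (lev u) then Some val else None)"

definition D0 :: "'o set list set" where
  "D0 = {d0. length d0 = u \<and> (\<forall>k<u. d0 ! k \<subseteq> {i. i < zs ! k})}"

definition hom_family :: "(nat \<Rightarrow> 'o set) \<Rightarrow> bool" where
  "hom_family H \<longleftrightarrow> (\<forall>j<E - u. H j \<subseteq> {i. i < zs ! (u + j)} \<and> |{i. i < mus ! (u + j)}| \<le>o |H j| ) \<and>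
    (\<forall>d0\<in>D0. \<forall>ds ds'. fits_sizes (E - u) (\<lambda>j. row_count (Suc (u + j))) H ds \<longrightarrow>
        fits_sizes (E - u) (\<lambda>j. row_count (Suc (u + j))) H ds' \<longrightarrow> tau_colour (d0 @ ds) = tau_colour (d0 @ ds'))"

definition Hhom where "Hhom = (SOME H. hom_family H)"

lemma hom_family_Hhom: "hom_family Hhom"
proof -
  have "\<exists>H. hom_family H" unfolding hom_family_def
  proof (rule iterated_erdos_rado[where K = "colours" and N = E and ?b0.0 = "max_size (take u zs)"
        and Bnd = "\<lambda>j. max_size (take (u + j) zs)"])
    show "small colours" by (simp add: colours_def small_colours)
    show "\<forall>ds. tau_colour ds \<in> colours" unfolding tau_colour_def colours_def Let_def by simp
    show "\<forall>j<E - u. zs ! (u + j) = arrow_bound (row_count (Suc (u + j))) (prefix_colourings E (max_size (take (u + j) zs)) colours) (mus ! (u + j))"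
    proof (intro allI impI)
      fix j assume j: "j < E - u"
      have "zs ! (Suc (u + j) - 1) = arrow_bound (row_count (Suc (u + j))) (prefix_colourings E (max_size (take (Suc (u + j) - 1) zs)) colours) (mus ! (Suc (u + j) - 1))"
        by (rule zs_late) (use j in auto)
      thus "zs ! (u + j) = arrow_bound (row_count (Suc (u + j))) (prefix_colourings E (max_size (take (u + j) zs)) colours) (mus ! (u + j))"
        by simp
    qed
    show "\<forall>j<E - u. max_size (take u zs) \<le> max_size (take (u + j) zs) \<and>
        (\<forall>j'<j. zs ! (u + j') \<le> max_size (take (u + j) zs))"
    proof (intro allI impI conjI)
      fix j assume j: "j < E - u"
      show "max_size (take u zs) \<le> max_size (take (u + j) zs)"
        by (rule max_size_mono) (simp add: set_take_subset_set_take)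
      fix j' assume j': "j' < j"
      have "zs ! (u + j') \<in> set (take (u + j) zs)"
        using j j' length_zs by (auto simp: in_set_conv_nth intro!: exI[of _ "u + j'"])
      thus "zs ! (u + j') \<le> max_size (take (u + j) zs)" by (rule max_size_ge)
    qed
    show "\<forall>d0\<in>D0. length d0 + (E - u) \<le> E \<and> (\<forall>d\<in>set d0. d \<subseteq> {i. i < max_size (take u zs)})"
    proof (intro ballI conjI)
      fix d0 assume d0: "d0 \<in> D0"
      thus "length d0 + (E - u) \<le> E" unfolding D0_def using u_less_iota by simp
      fix d assume "d \<in> set d0"
      then obtain k where k: "k < u" "d = d0 ! k" using d0 unfolding D0_def by (auto simp: in_set_conv_nth)
      have "d \<subseteq> {i. i < zs ! k}" using d0 k unfolding D0_def by simp
      moreover have "zs ! k \<in> set (take u zs)"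
        using k length_zs u_less_iota by (auto simp: in_set_conv_nth intro!: exI[of _ k])
      hence "zs ! k \<le> max_size (take u zs)" by (rule max_size_ge)
      ultimately show "d \<subseteq> {i. i < max_size (take u zs)}" by (auto intro: order_less_le_trans)
    qed
  qed
  thus ?thesis unfolding Hhom_def by (rule someI_ex)
qed

definition Xnew :: "nat \<Rightarrow> 'm set" where
  "Xnew k = (if k \<le> u then zenum k ` {j. j < zs ! (k - 1)}
     else (SOME B. B \<subseteq> zenum k ` Hhom (k - Suc u) \<and> |B| =o |{j. j < mus ! (k - 1)}| ))"

lemma Hhom_late:
  assumes "u < k" "k \<le> E"
  shows "Hhom (k - Suc u) \<subseteq> {i. i < zs ! (k - 1)}" "|{i. i < mus ! (k - 1)}| \<le>o |Hhom (k - Suc u)|"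
proof -
  have "k - Suc u < E - u" "u + (k - Suc u) = k - 1" using assms by auto
  thus "Hhom (k - Suc u) \<subseteq> {i. i < zs ! (k - 1)}" "|{i. i < mus ! (k - 1)}| \<le>o |Hhom (k - Suc u)|"
    using hom_family_Hhom unfolding hom_family_def by metis+
qed

lemma Xnew_late: "u < k \<Longrightarrow> k \<le> E \<Longrightarrow> Xnew k \<subseteq> zenum k ` Hhom (k - Suc u) \<and> |Xnew k| =o |{j. j < mus ! (k - 1)}|"
proof -
  assume k: "u < k" "k \<le> E"
  let ?H = "zenum k ` Hhom (k - Suc u)"
  have "inj_on (zenum k) (Hhom (k - Suc u))"
    using zenum_inj[of k] k Hhom_late(1)[OF k] inj_on_subset by auto
  hence "bij_betw (zenum k) (Hhom (k - Suc u)) ?H" by (simp add: bij_betw_imageI)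
  hence "|Hhom (k - Suc u)| =o |?H|" by (rule card_of_ordIsoI)
  hence "|{i. i < mus ! (k - 1)}| \<le>o |?H|" using Hhom_late(2)[OF k] ordLeq_ordIso_trans by blast
  hence "\<exists>B. B \<subseteq> ?H \<and> |B| =o |{i. i < mus ! (k - 1)}|" using ordLeq_ex_subset_ordIso by blast
  hence "(SOME B. B \<subseteq> ?H \<and> |B| =o |{i. i < mus ! (k - 1)}| ) \<subseteq> ?H \<and>
     |SOME B. B \<subseteq> ?H \<and> |B| =o |{i. i < mus ! (k - 1)}| | =o |{i. i < mus ! (k - 1)}|"
    by (rule someI_ex)
  thus ?thesis unfolding Xnew_def using k by simp
qed

lemma Xnew_sub_zenum: "1 \<le> k \<Longrightarrow> k \<le> E \<Longrightarrow> Xnew k \<subseteq> zenum k ` {j. j < zs ! (k - 1)}"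
proof -
  assume k: "1 \<le> k" "k \<le> E"
  show ?thesis
  proof (cases "k \<le> u")
    case True then show ?thesis unfolding Xnew_def by simp
  next
    case False
    thus ?thesis using Xnew_late Hhom_late(1) k by (meson image_mono not_le subset_trans)
  qed
qed

lemma Xnew_sub_Zbig: "1 \<le> k \<Longrightarrow> k \<le> E \<Longrightarrow> Xnew k \<subseteq> Zbig k"
  using Xnew_sub_zenum zenum_inj by blast

lemma Xnew_card: "1 \<le> k \<Longrightarrow> k \<le> E \<Longrightarrow> |Xnew k| =o |{j. j < mus ! (k - 1)}|"
proof -
  assume k: "1 \<le> k" "k \<le> E"
  show ?thesis
  proof (cases "k \<le> u")
    case True
    have "bij_betw (zenum k) {j. j < zs ! (k - 1)} (Xnew k)"
      unfolding Xnew_def using True zenum_inj[OF k] by (simp add: bij_betw_imageI)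
    hence "|{j. j < zs ! (k - 1)}| =o |Xnew k|" by (rule card_of_ordIsoI)
    thus ?thesis using zs_early[OF k(1) True] ordIso_symmetric by simp
  next
    case False then show ?thesis using Xnew_late k by simp
  qed
qed

lemma Xnew_level: "1 \<le> k \<Longrightarrow> k \<le> E \<Longrightarrow> Xnew k \<subseteq> {a. F a = lev k}"
  using Xnew_sub_Zbig Zbig_level by blast

lemma row_vals_props:
  assumes x: "length x = s" "\<forall>k\<in>{1..E}. x ! (k - 1) \<in> incr_seqs lt r (Xnew k)"
    and P: "P = cs \<or> P = cs'" and k: "1 \<le> k" "k \<le> E"
  shows "sorted_wrt lt (row_vals k x P)" "set (row_vals k x P) \<subseteq> set (x ! (k - 1))"
    "length (row_vals k x P) = row_count k" "distinct (row_vals k x P)"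
proof -
  have xk: "x ! (k - 1) \<in> incr_seqs lt r (Xnew k)" using x(2) k by simp
  hence xl: "length (x ! (k - 1)) = r" "sorted_wrt lt (x ! (k - 1))" unfolding incr_seqs_def by auto
  have sP: "sorted_wrt lexless P" using P sigma_iv_facts(4,7) by blast
  have bP: "\<forall>c\<in>set P. fst c = k \<longrightarrow> 1 \<le> snd c \<and> snd c \<le> length (x ! (k - 1))"
    using P consts_bounded_facts(1,2) xl(1) by fastforce
  show so: "sorted_wrt lt (row_vals k x P)" by (rule sorted_row_vals[OF sP bP xl(2)])
  show "set (row_vals k x P) \<subseteq> set (x ! (k - 1))" by (rule set_row_vals[OF bP])
  show "length (row_vals k x P) = row_count k" unfolding length_row_vals using P length_filter_cs' row_count_def by auto
  have "\<And>a. \<not> lt a a" using lin unfolding strict_linorder_def by blast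
  thus "distinct (row_vals k x P)" using so sorted_wrt_irrefl_distinct by blast
qed

definition early_code :: "'m list list \<Rightarrow> 'o set list" where
  "early_code x = map (\<lambda>k. {i \<in> {j. j < zs ! k}. zenum (Suc k) i \<in> set (x ! k)}) [0..<u]"

definition late_code :: "'m list list \<Rightarrow> (nat \<times> nat) list \<Rightarrow> 'o set list" where
  "late_code x P = map (\<lambda>j. {i \<in> {i. i < zs ! (u + j)}. zenum (Suc (u + j)) i \<in> set (row_vals (Suc (u + j)) x P)}) [0..<E - u]"

lemma early_code_D0: "early_code x \<in> D0"
  unfolding early_code_def D0_def by auto

lemma late_code_fits:
  assumes x: "length x = s" "\<forall>k\<in>{1..E}. x ! (k - 1) \<in> incr_seqs lt r (Xnew k)"
    and P: "P = cs \<or> P = cs'"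
  shows "fits_sizes (E - u) (\<lambda>j. row_count (Suc (u + j))) Hhom (late_code x P)"
  unfolding fits_sizes_def
proof (intro conjI allI impI)
  show "length (late_code x P) = E - u" unfolding late_code_def by simp
  fix j assume j: "j < E - u"
  define k where "k = Suc (u + j)"
  have k: "1 \<le> k" "k \<le> E" "u < k" using j unfolding k_def by auto
  have km: "k - 1 = u + j" "k - Suc u = j" unfolding k_def by simp_all
  have dj: "late_code x P ! j = {i \<in> {i. i < zs ! (k - 1)}. zenum k i \<in> set (row_vals k x P)}"
    unfolding late_code_def k_def using j by simp
  have inj: "inj_on (zenum k) {i. i < zs ! (k - 1)}" using zenum_inj[OF k(1,2)] by blast
  have sub1: "set (row_vals k x P) \<subseteq> set (x ! (k - 1))" using row_vals_props[OF x P k(1,2)] by blast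
  have sub2: "set (x ! (k - 1)) \<subseteq> Xnew k" using x(2) k unfolding incr_seqs_def by auto
  have sub3: "Xnew k \<subseteq> zenum k ` Hhom j" using Xnew_late[OF k(3,2)] km by simp
  have HPj: "Hhom j \<subseteq> {i. i < zs ! (k - 1)}"
    using hom_family_Hhom j km unfolding hom_family_def by auto
  show "late_code x P ! j \<subseteq> Hhom j"
  proof
    fix i assume "i \<in> late_code x P ! j"
    hence i: "i < zs ! (k - 1)" "zenum k i \<in> set (row_vals k x P)" using dj by auto
    then obtain i' where i': "i' \<in> Hhom j" "zenum k i = zenum k i'" using sub1 sub2 sub3 by blast
    have "i = i'" using inj_onD[OF inj i'(2)] i(1) i'(1) HPj by auto
    thus "i \<in> Hhom j" using i' by simp
  qed
  have A: "set (row_vals k x P) \<subseteq> zenum k ` {i. i < zs ! (k - 1)}" using sub1 sub2 sub3 HPj by blast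
  have pc: "finite (late_code x P ! j) \<and> card (late_code x P ! j) = card (set (row_vals k x P))"
    using finite_card_preimage_inj[OF inj A] dj by simp
  thus "finite (late_code x P ! j)" by simp
  have "card (set (row_vals k x P)) = row_count k"
    using row_vals_props[OF x P k(1,2)] distinct_card by metis
  thus "card (late_code x P ! j) = row_count (Suc (u + j))" using pc k_def by simp
qed

lemma row_vals_cong_row: "x ! (k - 1) = y ! (k - 1) \<Longrightarrow> row_vals k x P = row_vals k y P"
  unfolding row_vals_def by simp

lemma row_vals_early: "k \<le> u \<Longrightarrow> row_vals k x cs' = row_vals k x cs"
  unfolding row_vals_def using filter_cs'_early by simp

lemma row_props:
  assumes x: "\<forall>k\<in>{1..E}. x ! (k - 1) \<in> incr_seqs lt r (Xnew k)" and k: "1 \<le> k" "k \<le> E"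
  shows "set (x ! (k - 1)) \<subseteq> zenum k ` {j. j < zs ! (k - 1)}"
    "sorted_wrt lt (x ! (k - 1))" "length (x ! (k - 1)) = r"
proof -
  have "x ! (k - 1) \<in> incr_seqs lt r (Xnew k)" using x k by simp
  thus "set (x ! (k - 1)) \<subseteq> zenum k ` {j. j < zs ! (k - 1)}"
    "sorted_wrt lt (x ! (k - 1))" "length (x ! (k - 1)) = r"
    using Xnew_sub_zenum[OF k] unfolding incr_seqs_def by auto
qed

lemma early_rows_decode:
  assumes x: "length x = s" "\<forall>k\<in>{1..E}. x ! (k - 1) \<in> incr_seqs lt r (Xnew k)"
  shows "map (\<lambda>k. sort_by lt (zenum (Suc k) ` ((early_code x @ ds) ! k))) [0..<u] = take u x"
proof (rule nth_equalityI)
  show "length (map (\<lambda>k. sort_by lt (zenum (Suc k) ` ((early_code x @ ds) ! k))) [0..<u]) = length (take u x)"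
    using x(1) consts_bounded_facts(4) by simp
  fix k assume "k < length (map (\<lambda>k. sort_by lt (zenum (Suc k) ` ((early_code x @ ds) ! k))) [0..<u])"
  hence k: "k < u" by simp
  have k1: "1 \<le> Suc k" "Suc k \<le> E" using k u_less_iota by auto
  have "(early_code x @ ds) ! k = {i \<in> {j. j < zs ! k}. zenum (Suc k) i \<in> set (x ! k)}"
    unfolding early_code_def using k by (simp add: nth_append)
  moreover have "sort_by lt (zenum (Suc k) ` {i \<in> {j. j < zs ! k}. zenum (Suc k) i \<in> set (x ! k)}) = x ! k"
    by (rule sort_by_image_preimage[OF lin]) (use zenum_inj[OF k1] row_props[OF x(2) k1] in simp_all)
  ultimately show "map (\<lambda>k. sort_by lt (zenum (Suc k) ` ((early_code x @ ds) ! k))) [0..<u] ! k = take u x ! k"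
    using k by simp
qed

lemma late_rows_decode:
  assumes x: "length x = s" "\<forall>k\<in>{1..E}. x ! (k - 1) \<in> incr_seqs lt r (Xnew k)"
    and P: "P = cs \<or> P = cs'" and k: "u < k" "k \<le> E"
  shows "sort_by lt (zenum k ` ((early_code x @ late_code x P) ! (k - 1))) = row_vals k x P"
proof -
  have k1: "1 \<le> k" using k by simp
  have "length (early_code x) = u" unfolding early_code_def by simp
  moreover have "\<not> k - 1 < u" using k by simp
  ultimately have "(early_code x @ late_code x P) ! (k - 1) = late_code x P ! (k - 1 - u)"
    by (simp add: nth_append)
  also have "\<dots> = {i \<in> {i. i < zs ! (k - 1)}. zenum k i \<in> set (row_vals k x P)}"
    unfolding late_code_def using k by simp
  finally have "(early_code x @ late_code x P) ! (k - 1) =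
      {i \<in> {i. i < zs ! (k - 1)}. zenum k i \<in> set (row_vals k x P)}" .
  moreover have "sort_by lt (zenum k ` {i \<in> {i. i < zs ! (k - 1)}. zenum k i \<in> set (row_vals k x P)})
      = row_vals k x P"
  proof (rule sort_by_image_preimage[OF lin])
    show "inj_on (zenum k) {i. i < zs ! (k - 1)}" using zenum_inj[OF k1 k(2)] by simp
    show "set (row_vals k x P) \<subseteq> zenum k ` {i. i < zs ! (k - 1)}"
      using row_vals_props(2)[OF x P k1 k(2)] row_props(1)[OF x(2) k1 k(2)] by blast
  qed (rule row_vals_props(1)[OF x P k1 k(2)])
  ultimately show ?thesis by simp
qed

lemma tau_colour_code:
  assumes x: "length x = s" "\<forall>k\<in>{1..E}. x ! (k - 1) \<in> incr_seqs lt r (Xnew k)"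
    and P: "P = cs \<or> P = cs'"
  shows "tau_colour (early_code x @ late_code x P) = (if lt (eval_rows fI tau cs (\<lambda>k. row_vals k x P)) (cval x (u, v)) \<and>
            eval_rows fI tau cs (\<lambda>k. row_vals k x P) \<in> Mc (lev u)
          then Some (eval_rows fI tau cs (\<lambda>k. row_vals k x P)) else None)"
proof -
  define ds where "ds = early_code x @ late_code x P"
  define xs where "xs = map (\<lambda>k. sort_by lt (zenum (Suc k) ` (ds ! k))) [0..<u]"
  have xs_eq: "xs = take u x" unfolding xs_def ds_def by (rule early_rows_decode[OF x])
  define Sub where "Sub = (\<lambda>k. if k \<le> u then row_vals k xs cs else sort_by lt (zenum k ` (ds ! (k - 1))))"
  have "Sub k = row_vals k x P" if "k \<in> fst ` set cs" for k
  proof (cases "k \<le> u")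
    case True
    from that obtain j where kj: "(k, j) \<in> set cs" by force
    have "k - 1 < u" using True consts_bounded_facts(1)[OF kj] by linarith
    hence "xs ! (k - 1) = x ! (k - 1)" using xs_eq by simp
    hence "row_vals k xs cs = row_vals k x cs" by (rule row_vals_cong_row)
    also have "\<dots> = row_vals k x P" using P row_vals_early[OF True, of x] by (cases "P = cs") simp_all
    finally show ?thesis unfolding Sub_def using True by simp
  next
    case False
    from that obtain j where "(k, j) \<in> set cs" by force
    hence "k \<le> E" by (rule fst_le_iota[where c = "(k, j)", simplified])
    thus ?thesis unfolding Sub_def ds_def using late_rows_decode[OF x P] False by simp
  qed
  hence "eval_rows fI tau cs Sub = eval_rows fI tau cs (\<lambda>k. row_vals k x P)"
    by (intro eval_rows_cong[OF sigma_iv_facts(2)]) blast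
  moreover have "xs ! (u - 1) ! (v - 1) = cval x (u, v)"
    unfolding cval_def using xs_eq u_pos by simp
  ultimately show ?thesis
    unfolding ds_def[symmetric] tau_colour_def Let_def xs_def[symmetric] Sub_def[symmetric] by simp
qed

lemma product_sat_sigma:
  assumes x: "length x = s" "\<forall>k\<in>{1..E}. x ! (k - 1) \<in> incr_seqs lt r (Xnew k)"
  shows "sat_sigma fI lt tau cs u v ls x"
proof -
  have c1: "cs = cs \<or> cs = cs'" and c2: "cs' = cs \<or> cs' = cs'" by simp_all
  have hom: "tau_colour (early_code x @ late_code x cs) = tau_colour (early_code x @ late_code x cs')"
    using hom_family_Hhom early_code_D0 late_code_fits[OF x c1] late_code_fits[OF x c2] unfolding hom_family_def by blast
  define lhs where "lhs = teval fI (\<lambda>k. cval x (cs ! k)) tau"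
  define rhs where "rhs = teval fI (\<lambda>k. cval x (cs' ! k)) tau"
  have L: "eval_rows fI tau cs (\<lambda>k. row_vals k x cs) = lhs"
    unfolding lhs_def by (rule teval_eq_eval_rows[OF sigma_iv_facts(2), symmetric])
  have "eval_rows fI tau cs (\<lambda>k. row_vals k x cs') = eval_rows fI tau cs' (\<lambda>k. row_vals k x cs')"
    by (rule eval_rows_cong_fst[OF sigma_iv_facts(2) map_fst_cs'[symmetric]])
  also have "\<dots> = rhs" unfolding rhs_def using teval_eq_eval_rows[of tau cs' fI x] sigma_iv_facts(2) len_cs' by simp
  finally have R: "eval_rows fI tau cs (\<lambda>k. row_vals k x cs') = rhs" .
  have "lhs = rhs" if lt1: "lt lhs (cval x (u, v))"
  proof -
    have u1: "1 \<le> u" "u \<le> E" using u_pos u_less_iota by auto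
    have "cval x (u, v) \<in> set (x ! (u - 1))"
      unfolding cval_def using row_props(3)[OF x(2) u1] consts_bounded_facts(5,6) by simp
    moreover have "set (x ! (u - 1)) \<subseteq> Xnew u" using x(2) u1 unfolding incr_seqs_def by auto
    ultimately have "cval x (u, v) \<in> Mc (lev u)" using Xnew_level[OF u1] level_sub by blast
    hence lM: "lhs \<in> Mc (lev u)" using below_mem lt1 by blast
    have "tau_colour (early_code x @ late_code x cs) = Some lhs" using tau_colour_code[OF x c1] L lt1 lM by simp
    hence "tau_colour (early_code x @ late_code x cs') = Some lhs" using hom by simp
    moreover have "tau_colour (early_code x @ late_code x cs') = (if lt rhs (cval x (u, v)) \<and> rhs \<in> Mc (lev u) then Some rhs else None)"
      using tau_colour_code[OF x c2] unfolding R .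
    ultimately show ?thesis by (auto split: if_splits)
  qed
  thus ?thesis unfolding sat_sigma_def Let_def lhs_def rhs_def by blast
qed

abbreviation Ytail where "Ytail \<equiv> (\<Union>i\<in>{i. i \<noteq> ozero}. win_Y z0 (tail_shift zs i))"

lemma tail_shift_level: "i \<noteq> ozero \<Longrightarrow> tail_shift zs i \<noteq> ozero \<and> str z0 (tail_idx zs (E - e)) < str z0 (tail_shift zs i)"
proof -
  assume i: "i \<noteq> ozero"
  have g: "tail_idx zs (E - e) < tail_shift zs i" using tail_shift_nonzero[OF i, of zs] length_zs by simp
  hence "tail_shift zs i \<noteq> ozero" using ozero_least[of "tail_idx zs (E - e)"] by auto
  moreover have "str z0 (tail_idx zs (E - e)) < str z0 (tail_shift zs i)"
    using str_wins_parts(3)[OF length_z0] g strict_monoD by blast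
  ultimately show ?thesis by simp
qed

lemma Ytail_level: "a \<in> Ytail \<Longrightarrow> str z0 (tail_idx zs (E - e)) < F a"
proof -
  assume "a \<in> Ytail"
  then obtain i where i: "i \<noteq> ozero" "a \<in> win_Y z0 (tail_shift zs i)" by blast
  have "F a = str z0 (tail_shift zs i)" using win_Y_level[OF length_z0] tail_shift_level[OF i(1)] i(2) by blast
  thus ?thesis using tail_shift_level[OF i(1)] by simp
qed

lemma row_in_Zbig:
  assumes x: "\<forall>k\<in>{1..E}. x ! (k - 1) \<in> incr_seqs lt r (Xnew k)" and k: "1 \<le> k" "k \<le> E"
  shows "x ! (k - 1) \<in> incr_seqs lt r (Zbig k) \<and> (\<forall>a\<in>set (x ! (k - 1)). F a = lev k)"
proof -
  have "x ! (k - 1) \<in> incr_seqs lt r (Xnew k)" using x k by simp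
  thus ?thesis using incr_seqs_mono[OF Xnew_sub_Zbig[OF k]] Xnew_level[OF k]
    unfolding incr_seqs_def by blast
qed

lemma middle_rows_Fblocks:
  assumes x: "length x = s" "\<forall>k\<in>{1..E}. x ! (k - 1) \<in> incr_seqs lt r (Xnew k)"
  shows "take (E - e) (drop e x) \<in> Fblocks lt F r (E - e) (\<Union>i\<in>{i. i \<noteq> ozero}. win_Y z0 i)"
proof (rule Fblocks_levelsI[where L = "\<lambda>i. lev (Suc (e + i))"])
  show "length (take (E - e) (drop e x)) = E - e" using x(1) iota_le_s by simp
  show "1 \<le> r" by (rule rs(1))
  fix i assume i: "i < E - e"
  have k: "1 \<le> Suc (e + i)" "Suc (e + i) \<le> E" "e < Suc (e + i)" using i by auto
  have "Zbig (Suc (e + i)) \<subseteq> (\<Union>i\<in>{i. i \<noteq> ozero}. win_Y z0 i)"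
    unfolding Zbig_def using tail_idx_nonzero[OF k(3)] by auto
  moreover have "take (E - e) (drop e x) ! i = x ! (Suc (e + i) - 1)" using i x(1) iota_le_s by simp
  ultimately show "take (E - e) (drop e x) ! i \<in> incr_seqs lt r (\<Union>i\<in>{i. i \<noteq> ozero}. win_Y z0 i) \<and>
      (\<forall>a\<in>set (take (E - e) (drop e x) ! i). F a = lev (Suc (e + i)))"
    using row_in_Zbig[OF x(2) k(1,2)] incr_seqs_mono by metis
next
  fix i assume "Suc i < E - e"
  thus "lev (Suc (e + i)) < lev (Suc (e + Suc i))" using lev_mono by simp
qed

lemma product_in_S:
  assumes x: "length x = s" "\<forall>k\<in>{1..E}. x ! (k - 1) \<in> incr_seqs lt r (Xnew k)"
    and tl: "drop E x \<in> Fblocks lt F r (s - E) Ytail"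
  shows "x \<in> S"
proof (rule win_product_in_S[OF length_z0 x(1)])
  let ?Y = "\<Union>i\<in>{i. i \<noteq> ozero}. win_Y z0 i"
  note row = row_in_Zbig[OF x(2)]
  show "\<forall>k\<in>{1..e}. x ! (k - 1) \<in> incr_seqs lt r (win_X z0 k)"
  proof
    fix k assume k: "k \<in> {1..e}"
    hence "1 \<le> k" "k \<le> E" "Zbig k = win_X z0 k"
      using e_le_iota unfolding Zbig_def by auto
    thus "x ! (k - 1) \<in> incr_seqs lt r (win_X z0 k)" using row by metis
  qed
  have tail: "drop E x \<in> Fblocks lt F r (s - E) ?Y"
    by (rule Fblocks_mono[OF _ tl]) (use tail_shift_level in blast)
  have "take (E - e) (drop e x) @ drop E x \<in> Fblocks lt F r (E - e + (s - E)) ?Y"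
  proof (rule Fblocks_append[OF middle_rows_Fblocks[OF x] tail])
    assume "0 < E - e" "0 < s - E"
    have E1: "1 \<le> E" "E \<le> E" using e(1) e_le_iota by simp_all
    have "length (x ! (E - 1)) = r" using row[OF E1] unfolding incr_seqs_def by simp
    hence "x ! (E - 1) ! 0 \<in> set (x ! (E - 1))" using rs(1) by simp
    hence "F (x ! (E - 1) ! 0) = str z0 (tail_idx zs (E - e))"
      using row[OF E1] lev_ge_e[OF e_le_iota] by simp
    also have "\<dots> < F (drop E x ! 0 ! 0)"
    proof (rule Ytail_level)
      have "drop E x ! 0 \<in> incr_seqs lt r Ytail" using tl \<open>0 < s - E\<close> unfolding Fblocks_def by blast
      hence len0: "length (drop E x ! 0) = r" and sub: "set (drop E x ! 0) \<subseteq> Ytail"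
        unfolding incr_seqs_def by simp_all
      have "drop E x ! 0 ! 0 \<in> set (drop E x ! 0)" using rs(1) len0 by (intro nth_mem) simp
      thus "drop E x ! 0 ! 0 \<in> Ytail" by (rule subsetD[OF sub])
    qed
    also have "x ! (E - 1) = take (E - e) (drop e x) ! (E - e - 1)"
      using \<open>0 < E - e\<close> x(1) iota_le_s by simp
    finally show "F (take (E - e) (drop e x) ! (E - e - 1) ! 0) < F (drop E x ! 0 ! 0)" .
  qed
  moreover have "take (E - e) (drop e x) @ drop E x = drop e x"
    using e_le_iota by (metis append_take_drop_id drop_drop le_add_diff_inverse2)
  moreover have "E - e + (s - E) = s - e" using e_le_iota iota_le_s by simp
  ultimately show "drop e x \<in> Fblocks lt F r (s - e) ?Y" by simp
qed

lemma tail_shift_large: "\<exists>i. i \<noteq> ozero \<and> |{j. j < (m::'o)}| \<le>o |win_Y z0 (tail_shift zs i)|"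
proof -
  obtain j where j: "tail_idx zs (E - e) < j" "|{x. x < m}| \<le>o |win_Y z0 j|"
    using win_Y_large_beyond[OF length_z0] by blast
  have "tail_idx zs (length zs - e) \<le> j" using j(1) length_zs by simp
  then obtain i where i: "tail_shift zs i = j" using tail_shift_onto by blast
  have "i \<noteq> ozero"
  proof
    assume "i = ozero"
    hence "tail_shift zs i = tail_idx zs (E - e)" using tail_shift_zero length_zs by simp
    thus False using j(1) i by simp
  qed
  thus ?thesis using i j(2) by blast
qed

lemma str'_wins:
  "II_wins lt F r s E {x \<in> S. sat_sigma fI lt tau cs u v ls x} mus (\<lambda>k. str' (take k mus) ozero) (str' mus)"
  unfolding II_wins_iff
proof (intro conjI exI)
  show "\<forall>k. 1 \<le> k \<and> k < E \<longrightarrow> str' (take k mus) ozero < str' (take (Suc k) mus) ozero"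
    using str'_level lev_mono by simp
  show "str' (take E mus) ozero = str' mus ozero" using len by simp
  show "strict_mono (str' mus)" unfolding str'_tail
    using str_wins_parts(3)[OF length_z0] strict_mono_tail_shift by (simp add: strict_mono_def)
  show "II_wins_with lt F r s E {x \<in> S. sat_sigma fI lt tau cs u v ls x} mus (\<lambda>k. str' (take k mus) ozero)
      (str' mus) Xnew (\<lambda>i. win_Y z0 (tail_shift zs i))"
    unfolding II_wins_with_def
  proof (intro conjI ballI allI impI)
    fix k assume "k \<in> {1..E}"
    hence k: "1 \<le> k" "k \<le> E" by auto
    show "Xnew k \<subseteq> {a. F a = str' (take k mus) ozero}"
      using Xnew_level[OF k] str'_level[OF k] by simp
    show "|Xnew k| =o |{j. j < mus ! (k - 1)}|" by (rule Xnew_card[OF k])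
  next
    fix i :: 'o assume "i \<noteq> ozero"
    thus "win_Y z0 (tail_shift zs i) \<subseteq> {a. F a = str' mus i}"
      using win_Y_level[OF length_z0] tail_shift_level unfolding str'_tail by simp
  next
    fix m :: 'o
    show "\<exists>i. i \<noteq> ozero \<and> |{j. j < m}| \<le>o |win_Y z0 (tail_shift zs i)|"
      by (rule tail_shift_large)
  next
    fix x assume "length x = s \<and> (\<forall>k\<in>{1..E}. x ! (k - 1) \<in> incr_seqs lt r (Xnew k)) \<and>
        drop E x \<in> Fblocks lt F r (s - E) Ytail"
    thus "x \<in> {x \<in> S. sat_sigma fI lt tau cs u v ls x}"
      using product_in_S product_sat_sigma by blast
  qed
qed
end

theorem superlarge_sat_sigma:
  "\<exists>S'. S' \<subseteq> S \<and> superlarge lt F r s E S' \<and> (\<forall>a\<in>S'. sat_sigma fI lt tau cs u v ls a)"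
proof (intro exI conjI)
  show "superlarge lt F r s E {x \<in> S. sat_sigma fI lt tau cs u v ls x}"
    unfolding superlarge_def
  proof (intro conjI exI allI impI)
    show "{x \<in> S. sat_sigma fI lt tau cs u v ls x} \<subseteq> Fblocks lt F r s UNIV" using Ssub by blast
    fix mus :: "'o list" assume "length mus = E"
    thus "II_wins lt F r s E {x \<in> S. sat_sigma fI lt tau cs u v ls x} mus
        (\<lambda>k. str' (take k mus) ozero) (str' mus)" by (rule str'_wins)
  qed
qed auto

end

theorem proposition4p3:
  fixes isL :: "'f \<Rightarrow> bool" and ar :: "'f \<Rightarrow> nat" and rar :: "'r \<Rightarrow> nat"
    and fI :: "'f \<Rightarrow> 'm list \<Rightarrow> 'm" and rI :: "'r \<Rightarrow> 'm list \<Rightarrow> bool"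
    and lsym :: 'r
    and Mc :: "'o::wellorder \<Rightarrow> 'm set"
    and r s e :: nat and S :: "'m list list set"
    and tau :: "'f trm" and cs :: "(nat \<times> nat) list" and u v :: nat and ls :: "nat list"
  defines "lt \<equiv> (\<lambda>a b. rI lsym [a, b])"
  defines "F \<equiv> Fidx Mc"
  assumes countable_L: "countable (Collect isL)" "countable (UNIV :: 'r set)"
    and less_sym: "rar lsym = 2"
    and linord: "strict_linorder lt"
    and skolem: "skolem_model isL ar rar fI rI"
    and inacc: "strongly_inaccessible_type TYPE('o)"
    and thlike: "theta_like lt TYPE('o)"
    and chain_elem: "\<forall>i. elem_sub ar rar fI rI (Mc i) UNIV \<and> init_seg lt (Mc i) UNIV \<and> Mc i \<noteq> UNIV"
    and chain_end: "\<forall>i j. i < j \<longrightarrow> elem_sub ar rar fI rI (Mc i) (Mc j) \<and> init_seg lt (Mc i) (Mc j)"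
    and chain_limit: "\<forall>d. olimit d \<longrightarrow> Mc d = (\<Union>i\<in>{i. i < d}. Mc i)"
    and chain_union: "(\<Union>i. Mc i) = UNIV"
    and rs: "1 \<le> r" "1 \<le> s"
    and e: "1 \<le> e" "e \<le> s"
    and S: "S \<subseteq> Fblocks lt F r s UNIV" "superlarge lt F r s e S"
    and sig: "sigma_iv ar tau cs u v ls"
    and bnd: "consts_bounded r s cs u v ls"
    and iot: "e \<le> iota cs"
  shows "\<exists>S'. S' \<subseteq> S \<and> superlarge lt F r s (iota cs) S' \<and>
           (\<forall>a\<in>S'. sat_sigma fI lt tau cs u v ls a)"
proof -
  interpret inaccessible "TYPE('o)" by (unfold_locales) (rule inacc)
  have Mc_small: "small (Mc i)" for i
  proof -
    have "init_seg lt (Mc i) UNIV \<and> Mc i \<noteq> UNIV" using chain_elem by blast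
    thus ?thesis using thlike unfolding theta_like_def small_def by blast
  qed
  have Mc_mono: "Mc i \<subseteq> Mc j" if "i \<le> j" for i j
  proof (cases "i = j")
    case False
    hence "i < j" using that by simp
    hence "elem_sub ar rar fI rI (Mc i) (Mc j)" using chain_end by blast
    thus ?thesis unfolding elem_sub_def by blast
  qed simp
  interpret superlarge_game "TYPE('o)" lt Mc F r s e S fI ar tau cs u v ls
  proof (unfold_locales)
    show "strict_linorder lt" by (rule linord)
    show "F = Fidx Mc" by (simp add: F_def)
    show "\<And>i. small (Mc i)" by (rule Mc_small)
    show "\<And>i j. i \<le> j \<Longrightarrow> Mc i \<subseteq> Mc j" by (rule Mc_mono)
    show "\<And>i. init_seg lt (Mc i) UNIV" using chain_elem by blast
  qed (fact chain_union rs e S sig bnd iot)+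
  show ?thesis by (rule superlarge_sat_sigma)
qed

end
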